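(* There exists a two-sided non-adaptive tester for $k$-monotonicity of functions $f\colon[n]\to\{0,1\}$ with query complexity $q(n,\varepsilon,k)=\tilde{O}(1/\varepsilon^7)$, independent of $k$ and $n$.
   Context: $[n]=\{1,\dots,n\}$ with its usual order. A function $f\colon[n]\to\{0,1\}$ is $k$-monotone if there do not exist $x_1\leq\cdots\leq x_{k+1}$ with $f(x_1)=1$ and $f(x_i)\neq f(x_{i+1})$ for all $i\in[k]$. Distance is normalized Hamming distance. A (two-sided) tester, given $\varepsilon$ and query access to $f$, accepts $k$-monotone $f$ with probability at least $2/3$ and rejects $f$ that is $\varepsilon$-far from $k$-monotone with probability at least $2/3$; non-adaptive means queries do not depend on previous answers. $\tilde{O}(\cdot)$ hides polylogarithmic factors in its argument. *)

theory Defs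
  imports "HOL-Probability.Probability_Mass_Function"
begin

(* A function [n] -> {0,1} is represented as f :: nat => bool; only its values on {1..n} matter. *)

definition k_monotone :: "nat \<Rightarrow> nat \<Rightarrow> (nat \<Rightarrow> bool) \<Rightarrow> bool" where
  "k_monotone n k f \<longleftrightarrow>
     \<not> (\<exists>x :: nat \<Rightarrow> nat.
          (\<forall>i\<in>{1..k+1}. x i \<in> {1..n}) \<and>
          (\<forall>i\<in>{1..k}. x i \<le> x (i+1)) \<and>
          f (x 1) \<and>
          (\<forall>i\<in>{1..k}. f (x i) \<noteq> f (x (i+1))))"

definition hdist :: "nat \<Rightarrow> (nat \<Rightarrow> bool) \<Rightarrow> (nat \<Rightarrow> bool) \<Rightarrow> real" where
  "hdist n f g = real (card {x\<in>{1..n}. f x \<noteq> g x}) / real n"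

definition far_from_k_monotone :: "nat \<Rightarrow> nat \<Rightarrow> real \<Rightarrow> (nat \<Rightarrow> bool) \<Rightarrow> bool" where
  "far_from_k_monotone n k \<epsilon> f \<longleftrightarrow> (\<forall>g. k_monotone n k g \<longrightarrow> hdist n f g \<ge> \<epsilon>)"

(* Queries are chosen before any answers are seen (non-adaptivity). *)
definition nonadaptive_tester :: "nat \<Rightarrow> nat \<Rightarrow> (nat list \<times> (bool list \<Rightarrow> bool)) pmf \<Rightarrow> bool" where
  "nonadaptive_tester n q T \<longleftrightarrow>
     (\<forall>(Q, d) \<in> set_pmf T. length Q \<le> q \<and> set Q \<subseteq> {1..n})"

definition accept_prob :: "(nat list \<times> (bool list \<Rightarrow> bool)) pmf \<Rightarrow> (nat \<Rightarrow> bool) \<Rightarrow> real" where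
  "accept_prob T f = measure_pmf.prob T {(Q, d). d (map f Q)}"

end

theory Submission
  imports Defs "HOL-Probability.Hoeffding"
begin

text \<open>A function is \<open>k\<close>-monotone iff it changes value at most \<open>k\<close> times (counting a change
  from an implicit \<open>0\<close> before position \<open>1\<close>), and cancelling close pairs of changes shows that
  an \<open>\<epsilon>\<close>-far function has about \<open>(1 + 2\<epsilon>) k\<close> changes. Three testers cover all parameters.
  For \<open>k < 16 / \<epsilon>\<close>, sample \<open>O((k / \<epsilon>) log k)\<close> points and reject iff they witness a
  violation: a far function has \<open>k + 1\<close> consecutive alternating blocks of \<open>\<epsilon> n / (k + 1)\<close>
  points, and each is hit. For \<open>n = O(k / \<epsilon>\<^sup>2)\<close>, estimate the density of adjacent changes.
  Otherwise, estimate how often a random window of length \<open>w \<approx> \<epsilon> n / (8 k)\<close> sees both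
  values: this is at most \<open>k w / N\<close> for a \<open>k\<close>-monotone function, while a far function has
  \<open>(1 + \<epsilon> / 4) k w\<close> heavy windows, because rounding it to the majority values of light
  windows costs little and leaves few changes. All three use \<open>O(\<epsilon>\<^sup>-\<^sup>6)\<close> queries.\<close>
definition ext0 :: "(nat \<Rightarrow> bool) \<Rightarrow> nat \<Rightarrow> bool" where
  "ext0 f i \<longleftrightarrow> i \<noteq> 0 \<and> f i"

definition changes :: "nat \<Rightarrow> (nat \<Rightarrow> bool) \<Rightarrow> nat set" where
  "changes n f = {i\<in>{1..n}. ext0 f i \<noteq> ext0 f (i - 1)}"

definition num_changes :: "nat \<Rightarrow> (nat \<Rightarrow> bool) \<Rightarrow> nat" where
  "num_changes n f = card (changes n f)"

definition alternates_on :: "nat \<Rightarrow> nat set \<Rightarrow> (nat \<Rightarrow> bool) \<Rightarrow> bool" where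
  "alternates_on k A f \<longleftrightarrow>
     (\<exists>x. (\<forall>i\<in>{1..k+1}. x i \<in> A) \<and> (\<forall>i\<in>{1..k}. x i \<le> x (i+1)) \<and>
          f (x 1) \<and> (\<forall>i\<in>{1..k}. f (x i) \<noteq> f (x (i+1))))"

lemma k_monotone_iff_not_alternates: "k_monotone n k f \<longleftrightarrow> \<not> alternates_on k {1..n} f"
  unfolding k_monotone_def alternates_on_def ..

lemma alternates_on_mono: "alternates_on k A f \<Longrightarrow> A \<subseteq> B \<Longrightarrow> alternates_on k B f"
  unfolding alternates_on_def by blast

lemma alternates_on_cong:
  assumes "\<And>y. y \<in> A \<Longrightarrow> f y = g y"
  shows "alternates_on k A f \<longleftrightarrow> alternates_on k A g"
  unfolding alternates_on_def
proof (rule ex_cong1)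
  fix x
  show "((\<forall>i\<in>{1..k+1}. x i \<in> A) \<and> (\<forall>i\<in>{1..k}. x i \<le> x (i+1)) \<and>
      f (x 1) \<and> (\<forall>i\<in>{1..k}. f (x i) \<noteq> f (x (i+1)))) \<longleftrightarrow>
    ((\<forall>i\<in>{1..k+1}. x i \<in> A) \<and> (\<forall>i\<in>{1..k}. x i \<le> x (i+1)) \<and>
      g (x 1) \<and> (\<forall>i\<in>{1..k}. g (x i) \<noteq> g (x (i+1))))"
  proof (cases "\<forall>i\<in>{1..k+1}. x i \<in> A")
    case True
    then have fg: "f (x i) = g (x i)" if "i \<in> {1..k+1}" for i
      using assms that by blast
    have "(\<forall>i\<in>{1..k}. f (x i) \<noteq> f (x (i+1))) \<longleftrightarrow> (\<forall>i\<in>{1..k}. g (x i) \<noteq> g (x (i+1)))"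
      using fg by (intro ball_cong) auto
    then show ?thesis using fg[of 1] by simp
  qed blast
qed

lemma finite_changes [simp]: "finite (changes n f)"
  unfolding changes_def by auto

lemma changes_subset: "changes n f \<subseteq> {1..n}"
  unfolding changes_def by auto

lemma ex_change_between:
  assumes "a < b" "ext0 f a \<noteq> ext0 f b"
  shows "\<exists>p\<in>{a<..b}. ext0 f p \<noteq> ext0 f (p - 1)"
  using assms
proof (induction b)
  case (Suc b)
  show ?case
  proof (cases "ext0 f (Suc b) \<noteq> ext0 f b")
    case False
    then have "a < b" "ext0 f a \<noteq> ext0 f b" using Suc.prems by (auto simp: less_Suc_eq)
    then show ?thesis using Suc.IH by fastforce
  qed (use Suc.prems in \<open>auto intro!: bexI[of _ "Suc b"]\<close>)
qed simp

lemma ext0_eq_if_no_change: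
  assumes "a \<le> b" "\<And>p. a < p \<Longrightarrow> p \<le> b \<Longrightarrow> ext0 f p = ext0 f (p - 1)"
  shows "ext0 f a = ext0 f b"
  using ex_change_between[of a b f] assms by (cases "a = b") force+

text \<open>Between consecutive points of an alternating sequence, preceded by the point 0 where
  \<open>ext0 f\<close> is false, there is a change point; these are $k+1$ distinct change points.\<close>
lemma alternates_imp_num_changes_gt:
  assumes "alternates_on k {1..n} f"
  shows "k < num_changes n f"
proof -
  obtain x where x_in: "\<forall>i\<in>{1..k + 1}. x i \<in> {1..n}" and x_mono: "\<forall>i\<in>{1..k}. x i \<le> x (i + 1)"
    and x_first: "f (x 1)" and x_alt: "\<forall>i\<in>{1..k}. f (x i) \<noteq> f (x (i + 1))"
    using assms unfolding alternates_on_def by blast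
  define y where "y i = (if i = 0 then 0 else x i)" for i
  have ext_y: "ext0 f (y i) = f (x i)" if "i \<in> {1..k+1}" for i
    using x_in that by (force simp: y_def ext0_def)
  have step: "y i < y (Suc i) \<and> ext0 f (y i) \<noteq> ext0 f (y (Suc i))" if "i \<le> k" for i
  proof (cases "i = 0")
    case True
    have "x 1 \<in> {1..n}" using x_in by auto
    then show ?thesis using True x_first by (auto simp: y_def ext0_def)
  next
    case False
    then have "ext0 f (y i) \<noteq> ext0 f (y (Suc i))"
      using x_alt ext_y[of i] ext_y[of "Suc i"] that by auto
    moreover have "y i \<le> y (Suc i)" using x_mono that False by (auto simp: y_def)
    ultimately show ?thesis by (metis le_neq_implies_less)
  qed
  have y_mono: "y a \<le> y b" if "a \<le> b" "b \<le> Suc k" for a b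
    using that
  proof (induction b)
    case (Suc b)
    then show ?case using step[of b] by (auto simp: le_Suc_eq)
  qed simp
  have "\<forall>i. \<exists>p. i \<le> k \<longrightarrow> p \<in> {y i<..y (Suc i)} \<and> ext0 f p \<noteq> ext0 f (p - 1)"
    using step ex_change_between by blast
  then obtain p where p: "\<And>i. i \<le> k \<Longrightarrow> p i \<in> {y i<..y (Suc i)} \<and> ext0 f (p i) \<noteq> ext0 f (p i - 1)"
    by metis
  have p_changes: "p i \<in> changes n f" if "i \<le> k" for i
  proof -
    have "x (Suc i) \<le> n" using x_in that by auto
    then show ?thesis using p[OF that] by (auto simp: changes_def y_def)
  qed
  have "strict_mono_on {..k} p"
  proof (rule strict_mono_onI)
    fix i j assume "i \<in> {..k}" "j \<in> {..k}" "i < j"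
    then have "p i \<le> y (Suc i)" "y (Suc i) \<le> y j" "y j < p j"
      using p[of i] p[of j] y_mono[of "Suc i" j] by auto
    then show "p i < p j" by linarith
  qed
  then have "card (p ` {..k}) = k + 1"
    by (simp add: card_image strict_mono_on_imp_inj_on)
  moreover have "p ` {..k} \<subseteq> changes n f" using p_changes by auto
  ultimately show ?thesis unfolding num_changes_def by (metis Suc_eq_plus1 card_mono finite_changes less_eq_Suc_le)
qed

lemma ext0_nth_sorted_changes:
  fixes n :: nat and f :: "nat \<Rightarrow> bool"
  defines "ps \<equiv> sorted_list_of_set (changes n f)"
  assumes "j < length ps"
  shows "ext0 f (ps ! j) \<longleftrightarrow> even j"
proof -
  have strict: "sorted_wrt (<) ps" and set_ps: "set ps = changes n f"
    unfolding ps_def by auto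
  then have sorted: "sorted ps" using strict_sorted_iff by blast
  have changes_nth: "ext0 f (ps ! j) \<noteq> ext0 f (ps ! j - 1)" "ps ! j \<in> {1..n}" if "j < length ps" for j
    using nth_mem[OF that] set_ps by (auto simp: changes_def)
  have gap: "ext0 f a = ext0 f (ps ! j - 1)"
    if j: "j < length ps" and a: "a \<le> ps ! j - 1" "\<forall>i<j. ps ! i \<le> a" for a j
  proof (rule ext0_eq_if_no_change[OF a(1)], rule ccontr)
    fix q assume q: "a < q" "q \<le> ps ! j - 1" "ext0 f q \<noteq> ext0 f (q - 1)"
    have "ps ! j \<le> n" using changes_nth(2)[OF j] by simp
    then have "q \<in> set ps" using q unfolding set_ps changes_def by simp
    then obtain i where i: "i < length ps" "ps ! i = q" by (auto simp: in_set_conv_nth)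
    have "q < ps ! j" using q(1,2) by linarith
    then have "\<not> j \<le> i" using sorted_nth_mono[OF sorted _ i(1), of j] i(2) by fastforce
    then have "ps ! i \<le> a" using a(2) by (simp add: not_le)
    then show False using i(2) q(1) by simp
  qed
  show ?thesis
    using assms(2)
  proof (induction j)
    case 0
    have "ext0 f 0 = ext0 f (ps ! 0 - 1)" by (rule gap) (use 0 in auto)
    then show ?case using changes_nth(1)[OF 0] by (simp add: ext0_def)
  next
    case (Suc j)
    have lt: "ps ! j < ps ! Suc j" using strict Suc.prems by (simp add: sorted_wrt_nth_less)
    have "\<forall>i<Suc j. ps ! i \<le> ps ! j"
      using sorted_nth_mono[OF sorted] Suc.prems by (simp add: less_Suc_eq_le)
    then have "ext0 f (ps ! j) = ext0 f (ps ! Suc j - 1)"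
      using gap[OF Suc.prems] lt by simp
    then show ?case using changes_nth(1)[OF Suc.prems] Suc.IH Suc.prems by auto
  qed
qed

text \<open>The sorted change points themselves form an alternating sequence.\<close>
lemma num_changes_gt_imp_alternates:
  assumes "k < num_changes n f"
  shows "alternates_on k {1..n} f"
proof -
  define ps where "ps = sorted_list_of_set (changes n f)"
  have len: "length ps = num_changes n f" and strict: "sorted_wrt (<) ps"
    and set_ps: "set ps = changes n f"
    unfolding ps_def num_changes_def by auto
  have ps_in: "ps ! i \<in> {1..n}" if "i < length ps" for i
    using nth_mem[OF that] set_ps changes_subset by blast
  have val: "f (ps ! i) \<longleftrightarrow> even i" if "i < length ps" for i
    using ext0_nth_sorted_changes[of i n f] ps_in[OF that] that by (simp add: ps_def ext0_def)
  show ?thesis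
    unfolding alternates_on_def
  proof (intro exI[of _ "\<lambda>i. ps ! (i - 1)"] conjI ballI)
    fix i assume "i \<in> {1..k+1}"
    then show "ps ! (i - 1) \<in> {1..n}" using ps_in len assms by auto
  next
    fix i assume i: "i \<in> {1..k}"
    then show "ps ! (i - 1) \<le> ps ! (i + 1 - 1)"
      using strict len assms by (auto simp: sorted_wrt_nth_less less_imp_le)
    have "i - 1 < length ps" "i < length ps" using i len assms by auto
    then show "f (ps ! (i - 1)) \<noteq> f (ps ! (i + 1 - 1))"
      using val[of "i - 1"] val[of i] i by auto
  qed (use val[of 0] len assms in auto)
qed

lemma k_monotone_iff_num_changes_le: "k_monotone n k f \<longleftrightarrow> num_changes n f \<le> k"
  using alternates_imp_num_changes_gt num_changes_gt_imp_alternates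
  by (meson k_monotone_iff_not_alternates not_le)

definition mismatches :: "nat \<Rightarrow> (nat \<Rightarrow> bool) \<Rightarrow> (nat \<Rightarrow> bool) \<Rightarrow> nat" where
  "mismatches n f g = card {x\<in>{1..n}. f x \<noteq> g x}"

lemma mismatches_self [simp]: "mismatches n f f = 0"
  unfolding mismatches_def by simp

lemma mismatches_triangle: "mismatches n f h \<le> mismatches n f g + mismatches n g h"
proof -
  have "mismatches n f h \<le> card ({x\<in>{1..n}. f x \<noteq> g x} \<union> {x\<in>{1..n}. g x \<noteq> h x})"
    unfolding mismatches_def by (intro card_mono) auto
  also have "\<dots> \<le> mismatches n f g + mismatches n g h"
    unfolding mismatches_def by (rule card_Un_le)
  finally show ?thesis .
qed

lemma far_imp_mismatches_ge:
  assumes "far_from_k_monotone n k \<epsilon> f" "n \<ge> 1" "num_changes n g \<le> k"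
  shows "\<epsilon> * n \<le> real (mismatches n f g)"
proof -
  have "\<epsilon> \<le> hdist n f g"
    using assms(1,3) by (simp add: far_from_k_monotone_def k_monotone_iff_num_changes_le)
  then show ?thesis using assms(2) by (simp add: hdist_def mismatches_def field_simps)
qed

lemma far_imp_num_changes_gt:
  assumes "far_from_k_monotone n k \<epsilon> f" "n \<ge> 1" "\<epsilon> > 0"
  shows "k < num_changes n f"
proof (rule ccontr)
  assume "\<not> k < num_changes n f"
  then have "\<epsilon> * n \<le> 0" using far_imp_mismatches_ge[OF assms(1,2), of f] by simp
  then show False using assms(2,3) by (simp add: mult_le_0_iff)
qed

lemma card_separated_le:
  assumes "finite S" "S \<noteq> {}" "\<forall>p\<in>S. \<forall>q\<in>S. p < q \<longrightarrow> d < q - p"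
  shows "(card S - 1) * (d + 1) \<le> Max S - Min S"
  using assms
proof (induction S rule: finite_linorder_max_induct)
  case (insert b A)
  show ?case
  proof (cases "A = {}")
    case False
    have IH: "(card A - 1) * (d + 1) \<le> Max A - Min A"
      using insert.IH[OF False] insert.prems(2) by blast
    have max_A: "Max A \<in> A" "Max A < b" "Min A \<le> Max A"
      using False insert.hyps by auto
    have "d < b - Max A" using insert.prems(2) max_A by blast
    have "card A \<ge> 1" using False insert.hyps(1) by (simp add: Suc_leI card_gt_0_iff)
    moreover have "b \<notin> A" using insert.hyps(2) by blast
    ultimately have "card (insert b A) - 1 = (card A - 1) + 1"
      using insert.hyps(1) by simp
    moreover have "Max (insert b A) = b" "Min (insert b A) = Min A"
      using insert.hyps(1) False max_A by auto
    ultimately show ?thesis using IH max_A \<open>d < b - Max A\<close>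
      by (simp add: add_mult_distrib)
  qed simp
qed simp

lemma close_changes_exist:
  assumes "k \<ge> 1" "k < num_changes n f"
  obtains p q where "p \<in> changes n f" "q \<in> changes n f" "p < q" "q - p \<le> (n - 1) div k"
proof (rule ccontr)
  assume "\<not> thesis"
  then have sep: "\<forall>p\<in>changes n f. \<forall>q\<in>changes n f. p < q \<longrightarrow> (n - 1) div k < q - p"
    using that by (meson not_le)
  have ne: "changes n f \<noteq> {}" using assms(2) unfolding num_changes_def by auto
  have "Max (changes n f) \<le> n" "1 \<le> Min (changes n f)"
    using Max_in[OF finite_changes ne] Min_in[OF finite_changes ne] changes_subset by force+
  then have "(num_changes n f - 1) * ((n - 1) div k + 1) \<le> n - 1"
    using card_separated_le[OF finite_changes ne sep] unfolding num_changes_def by linarith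
  moreover have "k * ((n - 1) div k + 1) \<le> (num_changes n f - 1) * ((n - 1) div k + 1)"
    using assms(2) by (intro mult_right_mono) auto
  moreover have "n - 1 < k * ((n - 1) div k + 1)"
  proof -
    have "(n - 1) mod k < k" using assms(1) by simp
    moreover have "k * ((n - 1) div k + 1) = k * ((n - 1) div k) + k" by simp
    ultimately show ?thesis using mult_div_mod_eq[of k "n - 1"] by linarith
  qed
  ultimately show False by linarith
qed

lemma changes_flip_interval:
  assumes p: "p \<in> changes n f" and q: "q \<in> changes n f" and "p < q"
  shows "changes n (\<lambda>y. if p \<le> y \<and> y < q then \<not> f y else f y) = changes n f - {p, q}"
    (is "changes n ?f' = _")
proof -
  have "p \<ge> 1" using p changes_subset by force
  then have ext: "ext0 ?f' i \<longleftrightarrow> ext0 f i \<noteq> (p \<le> i \<and> i < q)" for i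
    by (auto simp: ext0_def)
  have "i \<in> changes n ?f' \<longleftrightarrow> i \<in> changes n f - {p, q}" for i
  proof (cases "i \<in> {1..n}")
    case True
    then have "(p \<le> i \<and> i < q) = (p \<le> i - 1 \<and> i - 1 < q) \<longleftrightarrow> i \<noteq> p \<and> i \<noteq> q"
      using \<open>p \<ge> 1\<close> \<open>p < q\<close> by auto
    then show ?thesis using True p q ext[of i] ext[of "i - 1"] unfolding changes_def by auto
  qed (unfold changes_def, blast)
  then show ?thesis by blast
qed

lemma reduce_changes:
  assumes "k \<ge> 1"
  obtains g where "num_changes n g \<le> k"
    "mismatches n f g \<le> ((num_changes n f - k + 1) div 2) * ((n - 1) div k)"
proof -
  have "\<exists>g. num_changes n g \<le> k \<and>
      mismatches n f g \<le> ((num_changes n f - k + 1) div 2) * ((n - 1) div k)"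
  proof (induction "num_changes n f" arbitrary: f rule: less_induct)
    case less
    show ?case
    proof (cases "num_changes n f \<le> k")
      case True
      then show ?thesis by (intro exI[of _ f]) simp
    next
      case False
      then have "k < num_changes n f" by simp
      then obtain p q where pq: "p \<in> changes n f" "q \<in> changes n f" "p < q"
        "q - p \<le> (n - 1) div k"
        by (rule close_changes_exist[OF assms])
      define f' where "f' = (\<lambda>y. if p \<le> y \<and> y < q then \<not> f y else f y)"
      have f': "num_changes n f' = num_changes n f - 2"
        using changes_flip_interval[OF pq(1-3)] pq
        by (simp add: f'_def num_changes_def card_Diff_subset)
      have half: "(num_changes n f' - k + 1) div 2 + 1 = (num_changes n f - k + 1) div 2"
      proof (cases "num_changes n f = k + 1")
        case False
        then have "num_changes n f - k + 1 = (num_changes n f' - k + 1) + 2"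
          using f' \<open>\<not> num_changes n f \<le> k\<close> by simp
        then show ?thesis by simp
      qed (simp add: f')
      obtain g where g: "num_changes n g \<le> k"
        "mismatches n f' g \<le> ((num_changes n f' - k + 1) div 2) * ((n - 1) div k)"
        using less.hyps[of f'] f' False by auto
      have "mismatches n f f' \<le> card {p..<q}"
        unfolding mismatches_def by (intro card_mono) (auto simp: f'_def)
      then have "mismatches n f f' \<le> (n - 1) div k" using pq by simp
      then have "mismatches n f g \<le> ((num_changes n f' - k + 1) div 2 + 1) * ((n - 1) div k)"
        using mismatches_triangle[of n f g f'] g(2) by (simp add: algebra_simps)
      then show ?thesis unfolding half using g(1) by blast
    qed
  qed
  then show ?thesis using that by blast
qed

lemma num_changes_adjacent_bounds:
  fixes n :: nat and f :: "nat \<Rightarrow> bool"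
  defines "D \<equiv> {x\<in>{1..n-1}. f x \<noteq> f (x + 1)}"
  shows "card D \<le> num_changes n f" "num_changes n f \<le> card D + 1"
proof -
  have "Suc ` D \<subseteq> changes n f" unfolding D_def changes_def ext0_def by auto
  then show "card D \<le> num_changes n f"
    unfolding num_changes_def using card_mono[OF finite_changes] card_image by (metis inj_Suc)
  have "changes n f \<subseteq> insert 1 (Suc ` D)"
  proof
    fix i assume i: "i \<in> changes n f"
    show "i \<in> insert 1 (Suc ` D)"
    proof (cases "i = 1")
      case False
      then have "i \<ge> 2" using i changes_subset by fastforce
      then have "i - 1 \<in> D" "i = Suc (i - 1)" using i unfolding D_def changes_def ext0_def by auto
      then show ?thesis by blast
    qed simp
  qed
  then have "num_changes n f \<le> card (insert 1 (Suc ` D))"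
    unfolding num_changes_def by (intro card_mono) (auto simp: D_def)
  also have "\<dots> \<le> card D + 1"
    by (simp add: card_insert_if card_image D_def)
  finally show "num_changes n f \<le> card D + 1" .
qed

text \<open>Cancelling close pairs of change points costs at most $(n-1)/k$ per pair, so an
  $\varepsilon$-far function has about $2\varepsilon k$ surplus change points.\<close>
lemma far_imp_num_changes_ge:
  assumes far: "far_from_k_monotone n k \<epsilon> f" and n: "n \<ge> 2" and k: "k \<ge> 1" and "\<epsilon> > 0"
  shows "k + 2 * \<epsilon> * k - 1 \<le> real (num_changes n f)"
proof -
  have gt: "k < num_changes n f" using far_imp_num_changes_gt[OF far] n assms(4) by simp
  obtain g where g: "num_changes n g \<le> k"
    "mismatches n f g \<le> ((num_changes n f - k + 1) div 2) * ((n - 1) div k)"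
    using reduce_changes[OF k] by blast
  have "\<epsilon> * n \<le> real (mismatches n f g)" using far_imp_mismatches_ge[OF far _ g(1)] n by simp
  also have "\<dots> \<le> real ((num_changes n f - k + 1) div 2) * real ((n - 1) div k)"
    using g(2) by (simp only: of_nat_le_iff flip: of_nat_mult)
  also have "\<dots> \<le> (real (num_changes n f - k + 1) / 2) * (real (n - 1) / k)"
    using of_nat_div_le_of_nat[of "num_changes n f - k + 1" 2] of_nat_div_le_of_nat[of "n - 1" k]
    by (intro mult_mono) auto
  also have "real (num_changes n f - k + 1) = real (num_changes n f) - k + 1"
    using gt by simp
  finally have A: "\<epsilon> * n \<le> (real (num_changes n f) - k + 1) / (2 * k) * real (n - 1)"
    by simp
  have "\<epsilon> * real (n - 1) \<le> \<epsilon> * n" using assms(4) by (intro mult_left_mono) auto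
  then have "\<epsilon> * real (n - 1) \<le> (real (num_changes n f) - k + 1) / (2 * k) * real (n - 1)"
    using A by linarith
  moreover have "0 < real (n - 1)" using n by simp
  ultimately have "\<epsilon> \<le> (real (num_changes n f) - k + 1) / (2 * k)"
    by (rule mult_right_le_imp_le)
  moreover have "(0::real) < 2 * k" using k by simp
  ultimately have "\<epsilon> * (2 * k) \<le> real (num_changes n f) - k + 1"
    using pos_le_divide_eq by blast
  then show ?thesis by (simp add: algebra_simps)
qed

definition k_monotonicity_tester ::
    "nat \<Rightarrow> nat \<Rightarrow> real \<Rightarrow> nat \<Rightarrow> (nat list \<times> (bool list \<Rightarrow> bool)) pmf \<Rightarrow> bool" where
  "k_monotonicity_tester n k \<epsilon> q T \<longleftrightarrow> nonadaptive_tester n q T \<and>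
     (\<forall>f. k_monotone n k f \<longrightarrow> accept_prob T f \<ge> 2/3) \<and>
     (\<forall>f. far_from_k_monotone n k \<epsilon> f \<longrightarrow> 1 - accept_prob T f \<ge> 2/3)"

text \<open>A non-adaptive tester that draws a seed from \<open>S\<close>, queries the list \<open>Q F\<close> and decides
  by \<open>\<Phi> F\<close>; the decision sees the answers as a function that is correct on the queries.\<close>
definition seeded_tester ::
    "'b pmf \<Rightarrow> ('b \<Rightarrow> nat list) \<Rightarrow> ('b \<Rightarrow> (nat \<Rightarrow> bool) \<Rightarrow> bool) \<Rightarrow>
     (nat list \<times> (bool list \<Rightarrow> bool)) pmf" where
  "seeded_tester S Q \<Phi> = map_pmf (\<lambda>F. (Q F, \<lambda>bs. \<Phi> F (\<lambda>y. the (map_of (zip (Q F) bs) y)))) S"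

lemma nonadaptive_seeded_tester:
  assumes "\<And>F. F \<in> set_pmf S \<Longrightarrow> length (Q F) \<le> q \<and> set (Q F) \<subseteq> {1..n}"
  shows "nonadaptive_tester n q (seeded_tester S Q \<Phi>)"
  using assms unfolding nonadaptive_tester_def seeded_tester_def by auto

lemma accept_prob_seeded_tester:
  assumes "\<And>F h h'. (\<And>y. y \<in> set (Q F) \<Longrightarrow> h y = h' y) \<Longrightarrow> \<Phi> F h = \<Phi> F h'"
  shows "accept_prob (seeded_tester S Q \<Phi>) f = measure_pmf.prob S {F. \<Phi> F f}"
proof -
  have "\<Phi> F (\<lambda>y. the (map_of (zip (Q F) (map f (Q F))) y)) = \<Phi> F f" for F
    by (rule assms) (simp add: map_of_zip_map)
  then show ?thesis
    unfolding accept_prob_def seeded_tester_def measure_map_pmf by (simp add: vimage_def)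
qed

lemma measure_bind_pmf_of_set:
  assumes "finite X" "X \<noteq> {}"
  shows "measure_pmf.prob (bind_pmf (pmf_of_set X) K) E = (\<Sum>x\<in>X. measure_pmf.prob (K x) E) / card X"
proof -
  have "measure_pmf.prob (bind_pmf (pmf_of_set X) K) E =
      measure_pmf.expectation (pmf_of_set X) (\<lambda>x. measure_pmf.prob (K x) E)"
    unfolding measure_pmf_bind
    by (rule measure_pmf.measure_bind[where N="count_space UNIV"])
      (auto simp: measure_pmf_in_subprob_algebra)
  then show ?thesis using assms by (simp add: integral_pmf_of_set)
qed

lemma measure_pmf_eq_1_if_all:
  "(\<And>x. x \<in> set_pmf M \<Longrightarrow> P x) \<Longrightarrow> measure_pmf.prob M {x. P x} = 1"
  by (subst measure_pmf.prob_eq_1) (auto intro!: AE_pmfI)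

lemma measure_pmf_Collect_not:
  "measure_pmf.prob M {x. \<not> P x} = 1 - measure_pmf.prob M {x. P x}"
  using measure_pmf.prob_compl[of "{x. P x}" M] by (simp add: Compl_eq_Diff_UNIV[symmetric] Collect_neg_eq)

lemma set_Pi_pmf_lessThan_memD:
  fixes s :: nat
  assumes "F \<in> set_pmf (Pi_pmf {..<s} d (\<lambda>_. P))" "i < s"
  shows "F i \<in> set_pmf P"
  using assms set_Pi_pmf[OF finite_lessThan[of s], of d "\<lambda>_. P"] by (auto simp: PiE_dflt_def)

lemma prob_Pi_pmf_of_set_all:
  assumes "finite U" "U \<noteq> {}"
  shows "measure_pmf.prob (Pi_pmf {..<s} d (\<lambda>_. pmf_of_set U)) {F. \<forall>i<s. P (F i)}
       = (real (card {y\<in>U. P y}) / card U) ^ s"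
proof -
  have "{F. \<forall>i<s. P (F i)} = Pi {..<s} (\<lambda>_. {y. P y})" by (auto simp: Pi_def)
  moreover have "U \<inter> {y. P y} = {y\<in>U. P y}" by auto
  ultimately show ?thesis using assms by (simp add: measure_Pi_pmf_Pi measure_pmf_of_set)
qed

lemma map_pmf_eq_bernoulli_pmf:
  "map_pmf Y P = bernoulli_pmf (measure_pmf.prob P {a. Y a})"
proof (rule pmf_eqI)
  fix b :: bool
  have "Y -` {True} = {a. Y a}" "Y -` {False} = {a. \<not> Y a}" by auto
  then show "pmf (map_pmf Y P) b = pmf (bernoulli_pmf (measure_pmf.prob P {a. Y a})) b"
    by (cases b) (simp_all add: pmf_map measure_pmf_Collect_not)
qed

lemma count_iid_binomial:
  "map_pmf (\<lambda>F. card {i\<in>{..<s}. Y (F i)}) (Pi_pmf {..<s} d (\<lambda>_. P))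
     = binomial_pmf s (measure_pmf.prob P {a. Y a})"
proof -
  have "Pi_pmf {..<s} (Y d) (\<lambda>_. map_pmf Y P) = map_pmf (\<lambda>h. Y \<circ> h) (Pi_pmf {..<s} d (\<lambda>_. P))"
    by (rule Pi_pmf_map) auto
  then have "map_pmf (\<lambda>F. card {i\<in>{..<s}. Y (F i)}) (Pi_pmf {..<s} d (\<lambda>_. P))
      = map_pmf (\<lambda>f. card {i\<in>{..<s}. f i})
          (Pi_pmf {..<s} (Y d) (\<lambda>_. bernoulli_pmf (measure_pmf.prob P {a. Y a})))"
    by (simp add: pmf.map_comp o_def map_pmf_eq_bernoulli_pmf)
  also have "\<dots> = binomial_pmf s (measure_pmf.prob P {a. Y a})"
    by (rule binomial_pmf_altdef'[symmetric]) auto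
  finally show ?thesis .
qed

lemma iid_frequency_tails:
  fixes s :: nat and \<delta> :: real and P :: "'a pmf" and Y :: "'a \<Rightarrow> bool"
  assumes s: "s > 0" and \<delta>: "\<delta> \<ge> 0"
  defines "p \<equiv> measure_pmf.prob P {a. Y a}"
  shows "measure_pmf.prob (Pi_pmf {..<s} d (\<lambda>_. P))
           {F. p + \<delta> \<le> real (card {i\<in>{..<s}. Y (F i)}) / s} \<le> exp (- 2 * s * \<delta>\<^sup>2)"
    and "measure_pmf.prob (Pi_pmf {..<s} d (\<lambda>_. P))
           {F. real (card {i\<in>{..<s}. Y (F i)}) / s \<le> p - \<delta>} \<le> exp (- 2 * s * \<delta>\<^sup>2)"
proof -
  interpret binomial_distribution s p
    by unfold_locales (auto simp: p_def)
  have binomial: "measure_pmf.prob (Pi_pmf {..<s} d (\<lambda>_. P)) {F. E (card {i\<in>{..<s}. Y (F i)})} =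
      measure_pmf.prob (binomial_pmf s p) {x. E x}" for E
    unfolding p_def count_iid_binomial[where Y=Y and s=s and d=d and P=P, symmetric] by (simp add: measure_map_pmf vimage_def)
  show "measure_pmf.prob (Pi_pmf {..<s} d (\<lambda>_. P))
           {F. p + \<delta> \<le> real (card {i\<in>{..<s}. Y (F i)}) / s} \<le> exp (- 2 * s * \<delta>\<^sup>2)"
    and "measure_pmf.prob (Pi_pmf {..<s} d (\<lambda>_. P))
           {F. real (card {i\<in>{..<s}. Y (F i)}) / s \<le> p - \<delta>} \<le> exp (- 2 * s * \<delta>\<^sup>2)"
        using binomial[of "\<lambda>c. p + \<delta> \<le> real c / s"] binomial[of "\<lambda>c. real c / s \<le> p - \<delta>"]
      prob_ge'[OF s \<delta>] prob_le'[OF s \<delta>]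
    by simp_all
qed

lemma exp_neg_two_le_third: "exp (-2::real) \<le> 1/3"
proof -
  have "3 \<le> exp (2::real)" using exp_ge_add_one_self[of 2] by simp
  then show ?thesis by (simp add: exp_minus inverse_eq_divide field_simps)
qed

lemma one_minus_power_le_exp:
  fixes x :: real
  assumes "x \<le> 1"
  shows "(1 - x) ^ s \<le> exp (- x * s)"
proof -
  have "(1 - x) ^ s \<le> exp (- x) ^ s"
    using assms by (intro power_mono) (auto simp: exp_ge_add_one_self[of "-x", simplified] add.commute)
  also have "\<dots> = exp (- x * s)" by (simp add: exp_of_nat_mult[symmetric] mult.commute)
  finally show ?thesis .
qed

lemma threshold_tester:
  fixes P :: "'a pmf" and Q :: "'a \<Rightarrow> nat list" and Y :: "(nat \<Rightarrow> bool) \<Rightarrow> 'a \<Rightarrow> bool"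
    and s r :: nat and lo hi :: real
  assumes s: "0 < s" and gap: "lo \<le> hi" "1 \<le> real s * ((hi - lo) / 2)\<^sup>2"
    and queries: "\<And>x. x \<in> set_pmf P \<Longrightarrow> length (Q x) \<le> r \<and> set (Q x) \<subseteq> {1..n}"
    and local: "\<And>x h h'. (\<And>y. y \<in> set (Q x) \<Longrightarrow> h y = h' y) \<Longrightarrow> Y h x = Y h' x"
  obtains T where "nonadaptive_tester n (s * r) T"
    "\<And>f. measure_pmf.prob P {x. Y f x} \<le> lo \<Longrightarrow> 2/3 \<le> accept_prob T f"
    "\<And>f. hi \<le> measure_pmf.prob P {x. Y f x} \<Longrightarrow> 2/3 \<le> 1 - accept_prob T f"
proof -
  define \<delta> where "\<delta> = (hi - lo) / 2"
  define S where "S = Pi_pmf {..<s} undefined (\<lambda>_. P)"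
  define QS where "QS F = concat (map (\<lambda>i. Q (F i)) [0..<s])" for F :: "nat \<Rightarrow> 'a"
  define freq where "freq h F = real (card {i\<in>{..<s}. Y h (F i)}) / s" for h F
  define T where "T = seeded_tester S QS (\<lambda>F h. freq h F < lo + \<delta>)"
  have \<delta>: "0 \<le> \<delta>" using gap(1) unfolding \<delta>_def by simp
  have "exp (- 2 * s * \<delta>\<^sup>2) \<le> exp (-2)" using gap(2) unfolding \<delta>_def by simp
  then have exp_le: "exp (- 2 * s * \<delta>\<^sup>2) \<le> 1/3" using exp_neg_two_le_third by linarith
  have "length (QS F) \<le> s * r \<and> set (QS F) \<subseteq> {1..n}" if "F \<in> set_pmf S" for F
  proof -
    have F: "F i \<in> set_pmf P" if "i < s" for i
      using set_Pi_pmf_lessThan_memD[of F s undefined P i] \<open>F \<in> set_pmf S\<close> that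
      by (simp add: S_def)
    have "length (QS F) = (\<Sum>i\<in>{..<s}. length (Q (F i)))"
      by (simp add: QS_def length_concat sum_list_sum_nth atLeast0LessThan)
    also have "\<dots> \<le> (\<Sum>i\<in>{..<s}. r)" using queries F by (intro sum_mono) auto
    moreover have "set (QS F) \<subseteq> {1..n}" using queries F by (fastforce simp: QS_def)
    ultimately show ?thesis by simp
  qed
  then have "nonadaptive_tester n (s * r) T"
    unfolding T_def by (rule nonadaptive_seeded_tester)
  moreover have accept: "accept_prob T f = measure_pmf.prob S {F. freq f F < lo + \<delta>}" for f
  proof -
    have "freq h F = freq h' F" if agree: "\<And>y. y \<in> set (QS F) \<Longrightarrow> h y = h' y" for F h h'
    proof -
      have "set (Q (F i)) \<subseteq> set (QS F)" if "i < s" for i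
        using that unfolding QS_def by auto
      then have "Y h (F i) = Y h' (F i)" if "i < s" for i
        using that agree by (intro local) blast
      then have "{i\<in>{..<s}. Y h (F i)} = {i\<in>{..<s}. Y h' (F i)}" by auto
      then show ?thesis unfolding freq_def by simp
    qed
    then show ?thesis unfolding T_def by (intro accept_prob_seeded_tester) metis
  qed
  moreover have "2/3 \<le> accept_prob T f" if "measure_pmf.prob P {x. Y f x} \<le> lo" for f
  proof -
    have "measure_pmf.prob S {F. \<not> freq f F < lo + \<delta>}
        \<le> measure_pmf.prob S {F. measure_pmf.prob P {x. Y f x} + \<delta> \<le> freq f F}"
      using that by (intro measure_pmf.finite_measure_mono) auto
    also have "\<dots> \<le> 1/3"
      using iid_frequency_tails(1)[OF s \<delta>, of undefined P "Y f"] exp_le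
      unfolding S_def freq_def by simp
    finally show ?thesis by (simp add: accept measure_pmf_Collect_not)
  qed
  moreover have "2/3 \<le> 1 - accept_prob T f" if "hi \<le> measure_pmf.prob P {x. Y f x}" for f
  proof -
    have "measure_pmf.prob S {F. freq f F < lo + \<delta>}
        \<le> measure_pmf.prob S {F. freq f F \<le> measure_pmf.prob P {x. Y f x} - \<delta>}"
      using that by (intro measure_pmf.finite_measure_mono) (auto simp: \<delta>_def field_simps)
    also have "\<dots> \<le> 1/3"
      using iid_frequency_tails(2)[OF s \<delta>, of undefined P "Y f"] exp_le
      unfolding S_def freq_def by simp
    finally show ?thesis by (simp add: accept)
  qed
  ultimately show ?thesis using that by blast
qed

definition changes_from :: "nat \<Rightarrow> nat \<Rightarrow> bool \<Rightarrow> (nat \<Rightarrow> bool) \<Rightarrow> nat set" where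
  "changes_from n a v g = {y\<in>{a..n}. g y \<noteq> (if y = a then v else g (y - 1))}"

lemma changes_from_1_False: "changes_from n 1 False g = changes n g"
  unfolding changes_from_def changes_def ext0_def by (intro set_eqI) auto

definition alternating_blocks ::
    "nat \<Rightarrow> nat \<Rightarrow> nat set \<Rightarrow> bool \<Rightarrow> (nat \<Rightarrow> bool) \<Rightarrow> (nat \<Rightarrow> nat set) \<Rightarrow> bool" where
  "alternating_blocks j m D b f A \<longleftrightarrow>
     (\<forall>i<j. A i \<subseteq> D \<and> m \<le> card (A i) \<and> (\<forall>y\<in>A i. f y \<longleftrightarrow> (b \<longleftrightarrow> even i))) \<and>
     (\<forall>i. Suc i < j \<longrightarrow> (\<forall>y\<in>A i. \<forall>y'\<in>A (Suc i). y < y'))"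

lemma alternating_blocks_Cons:
  assumes A: "alternating_blocks j m {Suc z..n} (\<not> b) f A" and "a \<le> z"
    and A0: "A0 \<subseteq> {a..n}" "\<forall>y\<in>A0. y \<le> z \<and> f y = b" "m \<le> card A0"
  shows "alternating_blocks (Suc j) m {a..n} b f (\<lambda>i. if i = 0 then A0 else A (i - 1))"
  unfolding alternating_blocks_def
proof (rule conjI; intro allI impI)
  fix i assume "i < Suc j"
  show "(if i = 0 then A0 else A (i - 1)) \<subseteq> {a..n} \<and>
      m \<le> card (if i = 0 then A0 else A (i - 1)) \<and>
      (\<forall>y\<in>if i = 0 then A0 else A (i - 1). f y \<longleftrightarrow> (b \<longleftrightarrow> even i))"
  proof (cases i)
    case 0
    then show ?thesis using A0 by auto
  next
    case (Suc i')
    then have "A i' \<subseteq> {Suc z..n}" "m \<le> card (A i')" "\<forall>y\<in>A i'. f y \<longleftrightarrow> (\<not> b \<longleftrightarrow> even i')"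
      using A \<open>i < Suc j\<close> unfolding alternating_blocks_def by auto
    then show ?thesis using Suc \<open>a \<le> z\<close> by auto
  qed
next
  fix i assume "Suc i < Suc j"
  then show "\<forall>y\<in>if i = 0 then A0 else A (i - 1). \<forall>y'\<in>if Suc i = 0 then A0 else A (Suc i - 1). y < y'"
  proof (cases i)
    case 0
    then have "A 0 \<subseteq> {Suc z..n}" using A \<open>Suc i < Suc j\<close> unfolding alternating_blocks_def by auto
    then show ?thesis using 0 A0(2) by fastforce
  next
    case (Suc i')
    then show ?thesis using A \<open>Suc i < Suc j\<close> unfolding alternating_blocks_def by auto
  qed
qed

lemma least_prefix_card:
  fixes B :: "nat set"
  assumes "finite B" "1 \<le> m" "m \<le> card B"
  obtains z where "z \<in> B" "m \<le> card {y\<in>B. y \<le> z}" "card {y\<in>B. y < z} < m"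
proof -
  define z where "z = (LEAST z. m \<le> card {y\<in>B. y \<le> z})"
  have "{y\<in>B. y \<le> Max B} = B" using assms(1) by auto
  then have ex: "m \<le> card {y\<in>B. y \<le> Max B}" using assms(3) by simp
  have prefix: "m \<le> card {y\<in>B. y \<le> z}" unfolding z_def by (rule LeastI[of _ "Max B"]) (rule ex)
  have below: "card {y\<in>B. y < z} < m"
  proof (cases "z = 0")
    case False
    have "\<not> m \<le> card {y\<in>B. y \<le> z - 1}"
      using not_less_Least[of "z - 1" "\<lambda>z. m \<le> card {y\<in>B. y \<le> z}"] False unfolding z_def by simp
    moreover have "{y\<in>B. y \<le> z - 1} = {y\<in>B. y < z}" using False by auto
    ultimately show ?thesis by simp
  qed (use assms(2) in simp)
  have "z \<in> B"
  proof (rule ccontr)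
    assume "z \<notin> B"
    then have "{y\<in>B. y \<le> z} = {y\<in>B. y < z}" by (auto simp: le_less)
    then show False using prefix below by simp
  qed
  then show ?thesis using that prefix below by blast
qed

text \<open>Greedily take the first \<open>m\<close> points with value \<open>b\<close>, then the first \<open>m\<close> points after
  them with value \<open>\<not> b\<close>, and so on. If this stops before \<open>j\<close> blocks, every stretch between
  consecutive blocks contains fewer than \<open>m\<close> points of the wrong value, so changing these
  gives a function with fewer than \<open>j\<close> changes.\<close>
lemma alternating_blocks_or_close:
  assumes m: "m \<ge> 1"
  shows "(\<exists>A. alternating_blocks j m {a..n} b f A) \<or>
    (\<exists>g. card (changes_from n a (\<not> b) g) \<le> j - 1 \<and> card {y\<in>{a..n}. f y \<noteq> g y} \<le> j * (m - 1))"
proof (induction j arbitrary: a b)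
  case 0
  show ?case by (simp add: alternating_blocks_def)
next
  case (Suc j a b)
  define B where "B = {y\<in>{a..n}. f y = b}"
  show ?case
  proof (cases "card B < m")
    case True
    have "changes_from n a (\<not> b) (\<lambda>_. \<not> b) = {}" unfolding changes_from_def by auto
    moreover have "{y\<in>{a..n}. f y \<noteq> (\<not> b)} = B" unfolding B_def by auto
    ultimately show ?thesis using True
      by (intro disjI2 exI[of _ "\<lambda>_. \<not> b"]) (simp add: le_trans[OF _ mult_le_mono1])
  next
    case False
    then obtain z where z: "z \<in> B" "m \<le> card {y\<in>B. y \<le> z}" "card {y\<in>B. y < z} < m"
      using least_prefix_card[of B m] m unfolding B_def by auto
    then have "a \<le> z" unfolding B_def by simp
    consider (blocks) A where "alternating_blocks j m {Suc z..n} (\<not> b) f A"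
      | (close) g' where "card (changes_from n (Suc z) b g') \<le> j - 1"
          "card {y\<in>{Suc z..n}. f y \<noteq> g' y} \<le> j * (m - 1)" "j \<noteq> 0"
      using Suc.IH[of "Suc z" "\<not> b"] by (cases "j = 0") (auto simp: alternating_blocks_def)
    then show ?thesis
    proof cases
      case blocks
      have "{y\<in>B. y \<le> z} \<subseteq> {a..n}" "\<forall>y\<in>{y\<in>B. y \<le> z}. y \<le> z \<and> f y = b"
        unfolding B_def by auto
      then show ?thesis using alternating_blocks_Cons[OF blocks \<open>a \<le> z\<close>] z(2) by blast
    next
      case close
      define g where "g y = (if y < z then \<not> b else if y = z then b else g' y)" for y
      have "changes_from n a (\<not> b) g \<subseteq> insert z (changes_from n (Suc z) b g')"
      proof
        fix y assume y: "y \<in> changes_from n a (\<not> b) g"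
        then have "a \<le> y" "y \<le> n" and change: "g y \<noteq> (if y = a then \<not> b else g (y - 1))"
          unfolding changes_from_def by auto
        show "y \<in> insert z (changes_from n (Suc z) b g')"
        proof (cases "y \<le> z")
          case True
          have "\<not> y < z"
          proof
            assume "y < z"
            moreover have "y - 1 < z" using \<open>y < z\<close> by linarith
            ultimately have "g y = (\<not> b)" "g (y - 1) = (\<not> b)" by (simp_all add: g_def)
            then show False using change by (cases "y = a") auto
          qed
          then show ?thesis using True by simp
        next
          case False
          then have "g y = g' y" "y \<noteq> a" "g (y - 1) = (if y = Suc z then b else g' (y - 1))"
            using \<open>a \<le> z\<close> by (auto simp: g_def)
          then have "g' y \<noteq> (if y = Suc z then b else g' (y - 1))" using change by simp
          then show ?thesis using False \<open>y \<le> n\<close> unfolding changes_from_def by auto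
        qed
      qed
      then have "card (changes_from n a (\<not> b) g) \<le> card (insert z (changes_from n (Suc z) b g'))"
        by (intro card_mono) (simp_all add: changes_from_def)
      also have "\<dots> \<le> Suc (card (changes_from n (Suc z) b g'))"
        by (simp add: card_insert_if changes_from_def)
      finally have "card (changes_from n a (\<not> b) g) \<le> Suc (card (changes_from n (Suc z) b g'))" .
      then have changes_g: "card (changes_from n a (\<not> b) g) \<le> Suc j - 1"
        using close(1,3) by linarith
      have "{y\<in>{a..n}. f y \<noteq> g y} \<subseteq> {y\<in>B. y < z} \<union> {y\<in>{Suc z..n}. f y \<noteq> g' y}"
        using z(1) unfolding g_def B_def by auto
      then have "card {y\<in>{a..n}. f y \<noteq> g y}
          \<le> card ({y\<in>B. y < z} \<union> {y\<in>{Suc z..n}. f y \<noteq> g' y})"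
        by (intro card_mono) (auto simp: B_def)
      also have "\<dots> \<le> card {y\<in>B. y < z} + card {y\<in>{Suc z..n}. f y \<noteq> g' y}"
        by (rule card_Un_le)
      finally have "card {y\<in>{a..n}. f y \<noteq> g y} \<le> (m - 1) + j * (m - 1)"
        using z(3) close(2) by linarith
      then have "card {y\<in>{a..n}. f y \<noteq> g y} \<le> Suc j * (m - 1)" by simp
      then show ?thesis using changes_g by blast
    qed
  qed
qed

lemma alternating_blocks_hit_imp_alternates:
  assumes A: "alternating_blocks (k + 1) m D True f A" and hit: "\<forall>i\<le>k. A i \<inter> S \<noteq> {}"
  shows "alternates_on k S f"
proof -
  have "\<forall>i. \<exists>y. i \<le> k \<longrightarrow> y \<in> A i \<inter> S" using hit by blast
  then obtain x where x: "\<And>i. i \<le> k \<Longrightarrow> x i \<in> A i \<inter> S" by metis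
  have order: "\<forall>y\<in>A j. \<forall>y'\<in>A (Suc j). y < y'" if "Suc j \<le> k" for j
    using A that unfolding alternating_blocks_def by (simp add: Suc_le_eq)
  have "x (i - 1) \<le> x i" if "i \<in> {1..k}" for i
  proof -
    have i: "Suc (i - 1) = i" "Suc (i - 1) \<le> k" using that by auto
    then have "x (i - 1) \<in> A (i - 1)" "x i \<in> A (Suc (i - 1))" using x by auto
    then show ?thesis using order[OF i(2)] by (blast intro: less_imp_le)
  qed
  moreover have "f (x i) \<longleftrightarrow> even i" if "i \<le> k" for i
    using A x[OF that] that unfolding alternating_blocks_def by auto
  ultimately show ?thesis
    unfolding alternates_on_def using x
    by (intro exI[of _ "\<lambda>i. x (i - 1)"]) (auto simp: Suc_le_eq)
qed

text \<open>A far function has \<open>k + 1\<close> alternating blocks of size \<open>m\<close> as soon as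
  \<open>(k + 1)(m - 1) < \<epsilon> n\<close>: otherwise it would be that close to a \<open>k\<close>-monotone function.\<close>
lemma far_imp_alternating_blocks:
  assumes far: "far_from_k_monotone n k \<epsilon> f" and "n \<ge> 1" "m \<ge> 1"
    and small: "(k + 1) * real (m - 1) < \<epsilon> * n"
  obtains A where "alternating_blocks (k + 1) m {1..n} True f A"
proof -
  have "\<not> (\<exists>g. card (changes_from n 1 False g) \<le> k \<and> card {y\<in>{1..n}. f y \<noteq> g y} \<le> (k + 1) * (m - 1))"
  proof
    assume "\<exists>g. card (changes_from n 1 False g) \<le> k \<and> card {y\<in>{1..n}. f y \<noteq> g y} \<le> (k + 1) * (m - 1)"
    then obtain g where "num_changes n g \<le> k" "mismatches n f g \<le> (k + 1) * (m - 1)"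
      unfolding changes_from_1_False num_changes_def mismatches_def by blast
    then have "\<epsilon> * n \<le> (k + 1) * real (m - 1)"
      using far_imp_mismatches_ge[OF far \<open>n \<ge> 1\<close>] by (metis of_nat_le_iff of_nat_mult order_trans of_nat_Suc Suc_eq_plus1 of_nat_add of_nat_1)
    then show False using small by (simp add: add.commute)
  qed
  then show ?thesis using alternating_blocks_or_close[OF \<open>m \<ge> 1\<close>, of "k + 1" 1 n True f] that by auto
qed

text \<open>The one-sided tester for small \<open>k\<close>: sample \<open>s\<close> uniform points and reject iff the
  samples witness a violation. Every block of a far function is missed with probability at most
  \<open>1 / (3 (k + 1))\<close>.\<close>
lemma alternation_tester:
  fixes n k :: nat and \<epsilon> :: real
  assumes n: "n \<ge> 1" and e: "0 < \<epsilon>" "\<epsilon> \<le> 1"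
  defines "s \<equiv> nat \<lceil>(k + 1) / \<epsilon> * ln (3 * (k + 1))\<rceil>"
  shows "\<exists>T. k_monotonicity_tester n k \<epsilon> s T"
proof -
  define S where "S = Pi_pmf {..<s} 0 (\<lambda>_. pmf_of_set {1..n})"
  define samples where "samples F = map F [0..<s]" for F :: "nat \<Rightarrow> nat"
  define T where "T = seeded_tester S samples (\<lambda>F h. \<not> alternates_on k (set (samples F)) h)"
  have in_range: "set (samples F) \<subseteq> {1..n}" if "F \<in> set_pmf S" for F
    using set_Pi_pmf_lessThan_memD[of F s 0 "pmf_of_set {1..n}"] that n
    by (auto simp: S_def samples_def)
  then have "nonadaptive_tester n s T"
    unfolding T_def by (intro nonadaptive_seeded_tester) (simp add: samples_def)
  moreover have accept: "accept_prob T f = measure_pmf.prob S {F. \<not> alternates_on k (set (samples F)) f}" for f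
    unfolding T_def by (rule accept_prob_seeded_tester) (metis alternates_on_cong)
  moreover have "2/3 \<le> accept_prob T f" if "k_monotone n k f" for f
  proof -
    have "measure_pmf.prob S {F. \<not> alternates_on k (set (samples F)) f} = 1"
      using that in_range alternates_on_mono
      by (intro measure_pmf_eq_1_if_all) (auto simp: k_monotone_iff_not_alternates)
    then show ?thesis by (simp add: accept)
  qed
  moreover have "2/3 \<le> 1 - accept_prob T f" if far: "far_from_k_monotone n k \<epsilon> f" for f
  proof -
    define m where "m = nat \<lceil>\<epsilon> * n / (k + 1)\<rceil>"
    have "0 < \<epsilon> * n / (k + 1)" using e n by simp
    then have m: "m \<ge> 1" "\<epsilon> * n / (k + 1) \<le> m" "real (m - 1) < \<epsilon> * n / (k + 1)"
      unfolding m_def by linarith+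
    then have "(real k + 1) * real (m - 1) < \<epsilon> * n" by (simp add: field_simps)
    then obtain A where A: "alternating_blocks (k + 1) m {1..n} True f A"
      by (rule far_imp_alternating_blocks[OF far n m(1)])
    have miss: "measure_pmf.prob S {F. \<forall>t<s. F t \<notin> A i} \<le> 1 / (3 * (k + 1))" if "i \<le> k" for i
    proof -
      have Ai: "A i \<subseteq> {1..n}" "m \<le> card (A i)"
        using A that unfolding alternating_blocks_def by auto
      then have "card (A i) \<le> n" using card_mono[of "{1..n}" "A i"] by simp
      have "{y\<in>{1..n}. y \<notin> A i} = {1..n} - A i" by auto
      then have "card {y\<in>{1..n}. y \<notin> A i} = n - card (A i)"
        using Ai by (simp add: card_Diff_subset finite_subset)
      moreover have "measure_pmf.prob S {F. \<forall>t<s. F t \<notin> A i}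
          = (real (card {y\<in>{1..n}. y \<notin> A i}) / card {1..n}) ^ s"
        unfolding S_def by (rule prob_Pi_pmf_of_set_all) (use n in auto)
      ultimately have "measure_pmf.prob S {F. \<forall>t<s. F t \<notin> A i} = (1 - real (card (A i)) / n) ^ s"
        using n \<open>card (A i) \<le> n\<close> by (simp add: of_nat_diff diff_divide_distrib)
      also have "\<dots> \<le> (1 - \<epsilon> / (k + 1)) ^ s"
      proof (rule power_mono)
        have "\<epsilon> * n / (k + 1) \<le> card (A i)" using m(2) Ai(2) by (meson of_nat_le_iff order_trans)
        then show "1 - real (card (A i)) / n \<le> 1 - \<epsilon> / (k + 1)"
          using n by (simp add: field_simps)
        show "0 \<le> 1 - real (card (A i)) / n" using \<open>card (A i) \<le> n\<close> n by simp
      qed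
      also have "\<dots> \<le> exp (- (\<epsilon> / (k + 1)) * s)"
        using e by (intro one_minus_power_le_exp) (simp add: field_simps)
      also have "\<dots> \<le> exp (- ln (3 * (k + 1)))"
      proof -
        have "ln (3 * (k + 1)) = (\<epsilon> / (k + 1)) * ((k + 1) / \<epsilon> * ln (3 * (k + 1)))" using e by simp
        also have "\<dots> \<le> (\<epsilon> / (k + 1)) * s"
          unfolding s_def using e by (intro mult_left_mono) (linarith, simp)
        finally show ?thesis by simp
      qed
      finally show ?thesis by (simp add: exp_minus inverse_eq_divide)
    qed
    have "{F. \<not> alternates_on k (set (samples F)) f} \<subseteq> (\<Union>i\<in>{..k}. {F. \<forall>t<s. F t \<notin> A i})"
    proof
      fix F assume "F \<in> {F. \<not> alternates_on k (set (samples F)) f}"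
      then obtain i where "i \<le> k" "A i \<inter> set (samples F) = {}"
        using alternating_blocks_hit_imp_alternates[OF A] by blast
      then have "\<forall>t<s. F t \<notin> A i" by (auto simp: samples_def)
      then show "F \<in> (\<Union>i\<in>{..k}. {F. \<forall>t<s. F t \<notin> A i})" using \<open>i \<le> k\<close> by blast
    qed
    then have "accept_prob T f \<le> measure_pmf.prob S (\<Union>i\<in>{..k}. {F. \<forall>t<s. F t \<notin> A i})"
      unfolding accept by (intro measure_pmf.finite_measure_mono) auto
    also have "\<dots> \<le> (\<Sum>i\<in>{..k}. measure_pmf.prob S {F. \<forall>t<s. F t \<notin> A i})"
      by (rule measure_pmf.finite_measure_subadditive_finite) auto
    also have "\<dots> \<le> (\<Sum>i\<in>{..k}. 1 / (3 * (k + 1)))" using miss by (intro sum_mono) auto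
    also have "\<dots> = 1/3" by (simp add: field_simps add_pos_pos)
    finally show ?thesis by simp
  qed
  ultimately show ?thesis unfolding k_monotonicity_tester_def by blast
qed

lemma prob_adjacent_change:
  assumes "n \<ge> 2"
  shows "measure_pmf.prob (pmf_of_set {1..n-1}) {x. f x \<noteq> f (x + 1)}
    = real (card {x\<in>{1..n-1}. f x \<noteq> f (x + 1)}) / real (n - 1)"
proof -
  have "{1..n-1} \<inter> {x. f x \<noteq> f (x + 1)} = {x\<in>{1..n-1}. f x \<noteq> f (x + 1)}" by auto
  then show ?thesis using assms by (simp add: measure_pmf_of_set)
qed

text \<open>When \<open>n = O(k / \<epsilon>\<^sup>2)\<close>, the density of adjacent changes is at most \<open>k / (n - 1)\<close>
  for a \<open>k\<close>-monotone function and at least \<open>(1 + \<epsilon>) k / (n - 1)\<close> for a far one; so it is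
  estimated from random adjacent pairs.\<close>
lemma edge_tester:
  fixes n k :: nat and \<epsilon> B :: real
  assumes n: "n \<ge> 2" and k: "k \<ge> 1" and e: "0 < \<epsilon>" "\<epsilon> \<le> 1" and ek: "2 \<le> \<epsilon> * k"
    and B: "real n \<le> B * k"
  defines "s \<equiv> nat \<lceil>4 * B\<^sup>2 / \<epsilon>\<^sup>2\<rceil>"
  shows "\<exists>T. k_monotonicity_tester n k \<epsilon> (s * 2) T"
proof -
  define N1 where "N1 = real (n - 1)"
  define lo where "lo = k / N1"
  define hi where "hi = (k + \<epsilon> * k) / N1"
  have n1: "0 < N1" "N1 \<le> n" using n unfolding N1_def by auto
  have "0 < B"
  proof (rule ccontr)
    assume "\<not> 0 < B"
    then have "B * k \<le> 0" by (simp add: mult_nonpos_nonneg)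
    then show False using B n by simp
  qed
  have s: "4 * B\<^sup>2 / \<epsilon>\<^sup>2 \<le> real s" unfolding s_def by linarith
  moreover have "0 < 4 * B\<^sup>2 / \<epsilon>\<^sup>2" using \<open>0 < B\<close> e by simp
  ultimately have "0 < s" by linarith
  have "\<epsilon> / (2 * B) \<le> (hi - lo) / 2"
  proof -
    have "\<epsilon> / (2 * B) = \<epsilon> * k / (2 * (B * k))" using k by simp
    also have "\<dots> \<le> \<epsilon> * k / (2 * N1)"
      using B n1 e \<open>0 < B\<close> k by (intro divide_left_mono) auto
    also have "\<dots> = (hi - lo) / 2" unfolding hi_def lo_def using n1 by (simp add: field_simps)
    finally show ?thesis .
  qed
  then have "(\<epsilon> / (2 * B))\<^sup>2 \<le> ((hi - lo) / 2)\<^sup>2" using e \<open>0 < B\<close> by (intro power_mono) auto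
  then have "(4 * B\<^sup>2 / \<epsilon>\<^sup>2) * (\<epsilon> / (2 * B))\<^sup>2 \<le> real s * ((hi - lo) / 2)\<^sup>2"
    using s by (intro mult_mono) auto
  moreover have "(4 * B\<^sup>2 / \<epsilon>\<^sup>2) * (\<epsilon> / (2 * B))\<^sup>2 = 1"
    using e \<open>0 < B\<close> by (simp add: power_divide power_mult_distrib)
  ultimately have gap: "1 \<le> real s * ((hi - lo) / 2)\<^sup>2" by linarith
  have "lo \<le> hi" using e n1 unfolding lo_def hi_def by (intro divide_right_mono) auto
  moreover have queries: "length [x, x + 1] \<le> 2 \<and> set [x, x + 1] \<subseteq> {1..n}"
    if "x \<in> set_pmf (pmf_of_set {1..n-1})" for x
    using that n by auto
  ultimately obtain T where T: "nonadaptive_tester n (s * 2) T"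
    "\<And>f. measure_pmf.prob (pmf_of_set {1..n-1}) {x. f x \<noteq> f (x + 1)} \<le> lo \<Longrightarrow> 2/3 \<le> accept_prob T f"
    "\<And>f. hi \<le> measure_pmf.prob (pmf_of_set {1..n-1}) {x. f x \<noteq> f (x + 1)} \<Longrightarrow> 2/3 \<le> 1 - accept_prob T f"
    by (rule threshold_tester[where Y = "\<lambda>h x. h x \<noteq> h (x + 1)", OF \<open>0 < s\<close> _ gap]) auto
  have "2/3 \<le> accept_prob T f" if "k_monotone n k f" for f
  proof (rule T(2))
    have "card {x\<in>{1..n-1}. f x \<noteq> f (x + 1)} \<le> k"
      using num_changes_adjacent_bounds(1)[of n f] that k_monotone_iff_num_changes_le by fastforce
    then show "measure_pmf.prob (pmf_of_set {1..n-1}) {x. f x \<noteq> f (x + 1)} \<le> lo"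
      unfolding prob_adjacent_change[OF n] lo_def N1_def[symmetric] using n1 by (simp add: divide_right_mono)
  qed
  moreover have "2/3 \<le> 1 - accept_prob T f" if "far_from_k_monotone n k \<epsilon> f" for f
  proof (rule T(3))
    have "k + \<epsilon> * k \<le> real (card {x\<in>{1..n-1}. f x \<noteq> f (x + 1)})"
      using far_imp_num_changes_ge[OF that n k e(1)] num_changes_adjacent_bounds(2)[of n f] ek
      by linarith
    then show "hi \<le> measure_pmf.prob (pmf_of_set {1..n-1}) {x. f x \<noteq> f (x + 1)}"
      unfolding prob_adjacent_change[OF n] hi_def N1_def[symmetric] using n1 by (simp add: divide_right_mono)
  qed
  ultimately show ?thesis using T(1) unfolding k_monotonicity_tester_def by blast
qed

definition sees_both :: "(nat \<Rightarrow> bool) \<Rightarrow> nat \<Rightarrow> (nat \<Rightarrow> nat) \<Rightarrow> bool" where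
  "sees_both f R js \<longleftrightarrow> (\<exists>j<R. f (js j)) \<and> (\<exists>j<R. \<not> f (js j))"

lemma diff_less_if_div_eq:
  fixes a b d :: nat
  assumes "a div d = b div d" "b \<le> a" "d > 0"
  shows "a - b < d"
proof -
  have "a = d * (a div d) + a mod d" by simp
  moreover have "b = d * (a div d) + b mod d" using assms(1) by simp
  moreover have "a mod d < d" using assms by simp
  ultimately show ?thesis by linarith
qed

text \<open>A window is heavy if it
  contains at least \<open>\<mu>\<close> points of each value, and light otherwise; a light window has a clear
  majority value.\<close>
locale windows =
  fixes n w \<mu> :: nat and f :: "nat \<Rightarrow> bool"
  assumes mu_pos: "\<mu> \<ge> 1" and two_mu_less: "2 * \<mu> < w" and w_le: "w \<le> n"
begin

definition num_windows :: nat where "num_windows = n + 1 - w"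
definition window :: "nat \<Rightarrow> nat set" where "window x = {x..<x+w}"
definition ones :: "nat \<Rightarrow> nat" where "ones x = card {y\<in>window x. f y}"
definition heavy :: "nat \<Rightarrow> bool" where "heavy x \<longleftrightarrow> \<mu> \<le> ones x \<and> \<mu> \<le> w - ones x"
definition heavy_starts :: "nat set" where "heavy_starts = {x\<in>{1..num_windows}. heavy x}"
definition light_starts :: "nat set" where "light_starts = {x\<in>{1..num_windows}. \<not> heavy x}"
definition majority :: "nat \<Rightarrow> bool" where "majority x \<longleftrightarrow> w - ones x < \<mu>"
definition minority :: "nat \<Rightarrow> nat set" where "minority x = {y\<in>window x. f y \<noteq> majority x}"
definition gap :: nat where "gap = w - 2 * \<mu>"

lemma gap_pos: "gap \<ge> 1"
  using two_mu_less unfolding gap_def by simp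

lemma num_windows_props: "num_windows \<ge> 1" "num_windows + w = n + 1"
  using w_le two_mu_less unfolding num_windows_def by auto

lemma finite_window [simp]: "finite (window x)" and card_window: "card (window x) = w"
  and window_nonempty: "window x \<noteq> {}"
  using two_mu_less unfolding window_def by auto

lemma finite_light_starts: "finite light_starts"
  unfolding light_starts_def by simp

lemma ones_le: "ones x \<le> w"
  unfolding ones_def using card_mono[of "window x" "{y\<in>window x. f y}"] by (simp add: card_window)

lemma card_zeros: "card {y\<in>window x. \<not> f y} = w - ones x"
proof -
  have "card {y\<in>window x. f y} + card {y\<in>window x. \<not> f y} = card (window x)"
    by (subst card_Un_disjoint[symmetric]) (auto intro: arg_cong[where f = card])
  then show ?thesis by (simp add: ones_def card_window)
qed

lemma card_minority_less:
  assumes "\<not> heavy x"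
  shows "card (minority x) < \<mu>"
proof (cases "majority x")
  case True
  then have "minority x = {y\<in>window x. \<not> f y}" unfolding minority_def by auto
  then show ?thesis using True card_zeros by (simp add: majority_def)
next
  case False
  then have "minority x = {y\<in>window x. f y}" unfolding minority_def by auto
  then show ?thesis using False assms by (simp add: majority_def heavy_def ones_def)
qed

text \<open>Two light windows whose starts differ by at most \<open>gap\<close> overlap in at least \<open>2 \<mu>\<close>
  points, more than their minorities can cover.\<close>
lemma majority_eq_if_close:
  assumes "x \<in> light_starts" "x' \<in> light_starts" "x \<le> x'" "x' \<le> x + gap"
  shows "majority x = majority x'"
proof (rule ccontr)
  assume "majority x \<noteq> majority x'"
  then have "{x'..<x+w} \<subseteq> minority x \<union> minority x'"
    using assms(3) unfolding minority_def window_def by auto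
  then have "card {x'..<x+w} \<le> card (minority x \<union> minority x')"
    by (rule card_mono[rotated]) (simp add: minority_def)
  also have "\<dots> \<le> card (minority x) + card (minority x')" by (rule card_Un_le)
  also have "\<dots> < 2 * \<mu>"
    using card_minority_less[of x] card_minority_less[of x'] assms(1,2)
    unfolding light_starts_def by simp
  finally show False using assms(4) two_mu_less unfolding gap_def by simp
qed

text \<open>The last light window starting at or before \<open>y\<close> (the first light window if there is
  none); rounding \<open>f\<close> to its majority value changes \<open>f\<close> only at heavy starts, at the last
  \<open>w\<close> points, and at minority points of light windows.\<close>
definition last_light :: "nat \<Rightarrow> nat" where
  "last_light y = (if \<exists>x\<in>light_starts. x \<le> y then Max {x\<in>light_starts. x \<le> y} else Min light_starts)"

definition rounded :: "nat \<Rightarrow> bool" where "rounded y \<longleftrightarrow> majority (last_light y)"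

definition switches :: "nat set" where
  "switches = {y\<in>light_starts. \<exists>x\<in>light_starts. x < y \<and> majority x \<noteq> majority y \<and>
      (\<forall>z. x < z \<and> z < y \<longrightarrow> z \<notin> light_starts)}"

lemma last_light_greatest:
  assumes "x \<in> light_starts" "x \<le> y"
  shows "last_light y \<in> light_starts" "x \<le> last_light y" "last_light y \<le> y"
proof -
  have fin: "finite {x\<in>light_starts. x \<le> y}" and x: "x \<in> {x\<in>light_starts. x \<le> y}"
    using finite_light_starts assms by auto
  then have "Max {x\<in>light_starts. x \<le> y} \<in> {x\<in>light_starts. x \<le> y}" by (intro Max_in) auto
  moreover have "last_light y = Max {x\<in>light_starts. x \<le> y}" using assms unfolding last_light_def by auto
  ultimately show "last_light y \<in> light_starts" "x \<le> last_light y" "last_light y \<le> y"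
    using Max_ge[OF fin x] by auto
qed

lemma last_light_eq: "y \<in> light_starts \<Longrightarrow> last_light y = y"
  using last_light_greatest[of y y] by simp

lemma last_light_eq_pred:
  assumes "y \<ge> 1" "y \<notin> light_starts \<or> (\<forall>x\<in>light_starts. y \<le> x)"
  shows "last_light y = last_light (y - 1)"
proof (cases "\<exists>x\<in>light_starts. x \<le> y - 1")
  case True
  then have "{x\<in>light_starts. x \<le> y} = {x\<in>light_starts. x \<le> y - 1}"
    using assms by (auto simp: le_Suc_eq dest: le_antisym)
  then show ?thesis using True unfolding last_light_def by auto
next
  case False
  then have pred: "last_light (y - 1) = Min light_starts" unfolding last_light_def by simp
  show ?thesis
  proof (cases "y \<in> light_starts")
    case True
    then have "Min light_starts = y" using assms(2) finite_light_starts by (intro Min_eqI) auto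
    then show ?thesis using pred last_light_eq[OF True] by simp
  next
    case y: False
    have "\<not> (\<exists>x\<in>light_starts. x \<le> y)"
    proof
      assume "\<exists>x\<in>light_starts. x \<le> y"
      then obtain x where "x \<in> light_starts" "x \<le> y" by blast
      moreover from this have "x \<noteq> y" using y by auto
      ultimately show False using False by force
    qed
    then show ?thesis using pred unfolding last_light_def by simp
  qed
qed

lemma changes_rounded_subset: "changes n rounded \<subseteq> insert 1 switches"
proof
  fix y assume y: "y \<in> changes n rounded"
  show "y \<in> insert 1 switches"
  proof (cases "y = 1")
    case False
    then have "y \<ge> 2" using y changes_subset by fastforce
    then have "rounded y \<noteq> rounded (y - 1)" using y unfolding changes_def ext0_def by auto
    then have "last_light y \<noteq> last_light (y - 1)" unfolding rounded_def by auto
    then have "\<not> (y \<notin> light_starts \<or> (\<forall>x\<in>light_starts. y \<le> x))"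
      using last_light_eq_pred[of y] \<open>y \<ge> 2\<close> by fastforce
    then obtain x where "y \<in> light_starts" "x \<in> light_starts" "x < y" by (auto simp: not_le)
    define x0 where "x0 = last_light (y - 1)"
    have x0: "x0 \<in> light_starts" "x0 \<le> y - 1" "\<And>z. z \<in> light_starts \<Longrightarrow> z \<le> y - 1 \<Longrightarrow> z \<le> x0"
      using last_light_greatest[of _ "y - 1"] \<open>x \<in> light_starts\<close> \<open>x < y\<close> unfolding x0_def by auto
    have "majority x0 \<noteq> majority y"
      using \<open>rounded y \<noteq> rounded (y - 1)\<close> last_light_eq[OF \<open>y \<in> light_starts\<close>]
      unfolding rounded_def x0_def by simp
    moreover have "\<forall>z. x0 < z \<and> z < y \<longrightarrow> z \<notin> light_starts" using x0(3) by fastforce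
    ultimately show ?thesis
      using \<open>y \<in> light_starts\<close> x0 \<open>y \<ge> 2\<close> unfolding switches_def by fastforce
  qed simp
qed

lemma switch_preceded_by_heavy:
  assumes "y \<in> switches"
  shows "{y - gap..<y} \<subseteq> heavy_starts" "gap < y" "\<And>y'. y' \<in> switches \<Longrightarrow> y' < y \<Longrightarrow> y' \<le> y - gap"
proof -
  obtain x where x: "x \<in> light_starts" "x < y" "majority x \<noteq> majority y"
      "\<forall>z. x < z \<and> z < y \<longrightarrow> z \<notin> light_starts" and "y \<in> light_starts"
    using assms unfolding switches_def by blast
  have "x + gap < y"
  proof (rule ccontr)
    assume "\<not> x + gap < y"
    then have "majority x = majority y"
      using majority_eq_if_close[of x y] x(1,2) \<open>y \<in> light_starts\<close> by simp
    then show False using x(3) by simp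
  qed
  then show "gap < y" by simp
  show "{y - gap..<y} \<subseteq> heavy_starts"
  proof
    fix z assume "z \<in> {y - gap..<y}"
    then have "x < z" "z < y" using \<open>x + gap < y\<close> by auto
    then have "z \<notin> light_starts" using x(4) by blast
    moreover have "z \<in> {1..num_windows}"
      using \<open>x < z\<close> \<open>z < y\<close> \<open>y \<in> light_starts\<close> unfolding light_starts_def by auto
    ultimately show "z \<in> heavy_starts" unfolding light_starts_def heavy_starts_def by auto
  qed
  show "y' \<le> y - gap" if "y' \<in> switches" "y' < y" for y'
  proof -
    have "y' \<in> light_starts" using that(1) unfolding switches_def by blast
    then have "\<not> x < y'" using x(4) that(2) by blast
    then show ?thesis using \<open>x + gap < y\<close> by linarith
  qed
qed

lemma card_switches: "card switches * gap \<le> card heavy_starts"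
proof -
  have "card {y - gap..<y} = gap" if "y \<in> switches" for y
    using switch_preceded_by_heavy(2)[OF that] by simp
  then have "card switches * gap = (\<Sum>y\<in>switches. card {y - gap..<y})" by simp
  also have "\<dots> = card (\<Union>y\<in>switches. {y - gap..<y})"
  proof (rule card_UN_disjoint[symmetric])
    show "finite switches" using finite_light_starts unfolding switches_def by simp
    show "\<forall>y\<in>switches. \<forall>y'\<in>switches. y \<noteq> y' \<longrightarrow> {y - gap..<y} \<inter> {y' - gap..<y'} = {}"
      using switch_preceded_by_heavy(3) by (fastforce simp: neq_iff)
  qed simp
  also have "\<dots> \<le> card heavy_starts"
    using switch_preceded_by_heavy(1) by (intro card_mono) (auto simp: heavy_starts_def)
  finally show ?thesis .
qed

lemma num_changes_rounded: "(num_changes n rounded - 1) * gap \<le> card heavy_starts"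
proof -
  have "finite switches" using finite_light_starts unfolding switches_def by simp
  then have "num_changes n rounded \<le> card (insert 1 switches)"
    unfolding num_changes_def by (intro card_mono changes_rounded_subset) simp
  also have "\<dots> \<le> card switches + 1" using \<open>finite switches\<close> by (simp add: card_insert_if)
  finally have "num_changes n rounded - 1 \<le> card switches" by simp
  then have "(num_changes n rounded - 1) * gap \<le> card switches * gap" by simp
  then show ?thesis using card_switches by linarith
qed

text \<open>Light windows starting in one block of \<open>gap\<close> consecutive positions share their majority,
  so the minority points among their starts lie in the first window of the block.\<close>
lemma card_minority_block:
  "card {y\<in>light_starts. f y \<noteq> majority y \<and> (y - 1) div gap = c} \<le> \<mu>"
proof (cases "{y\<in>light_starts. (y - 1) div gap = c} = {}")
  case False
  define y0 where "y0 = Min {y\<in>light_starts. (y - 1) div gap = c}"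
  have fin: "finite {y\<in>light_starts. (y - 1) div gap = c}" using finite_light_starts by simp
  have "y0 \<in> {y\<in>light_starts. (y - 1) div gap = c}" unfolding y0_def by (rule Min_in[OF fin False])
  then have y0: "y0 \<in> light_starts" "(y0 - 1) div gap = c" by auto
  have "{y\<in>light_starts. f y \<noteq> majority y \<and> (y - 1) div gap = c} \<subseteq> minority y0"
  proof
    fix y assume y: "y \<in> {y\<in>light_starts. f y \<noteq> majority y \<and> (y - 1) div gap = c}"
    have "y0 \<le> y" unfolding y0_def using y by (intro Min_le[OF fin]) auto
    moreover have "y0 \<ge> 1" "y \<ge> 1" using y0 y unfolding light_starts_def by auto
    ultimately have "(y - 1) - (y0 - 1) < gap"
      using diff_less_if_div_eq[of "y - 1" gap "y0 - 1"] y y0 gap_pos by auto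
    then have "y < y0 + gap" using \<open>y0 \<le> y\<close> \<open>y0 \<ge> 1\<close> by linarith
    then have "majority y0 = majority y" "y \<in> window y0"
      using majority_eq_if_close[of y0 y] y0 y \<open>y0 \<le> y\<close> two_mu_less
      unfolding window_def gap_def by auto
    then show "y \<in> minority y0" using y unfolding minority_def by auto
  qed
  then have "card {y\<in>light_starts. f y \<noteq> majority y \<and> (y - 1) div gap = c} \<le> card (minority y0)"
    by (rule card_mono[rotated]) (simp add: minority_def)
  also have "\<dots> < \<mu>" using card_minority_less y0 unfolding light_starts_def by auto
  finally show ?thesis by simp
next
  case True
  then have empty: "{y\<in>light_starts. f y \<noteq> majority y \<and> (y - 1) div gap = c} = {}" by auto
  show ?thesis unfolding empty by simp
qed

lemma card_light_minority: "card {y\<in>light_starts. f y \<noteq> majority y} \<le> \<mu> * (num_windows div gap + 1)"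
proof -
  let ?block = "\<lambda>c. {y\<in>light_starts. f y \<noteq> majority y \<and> (y - 1) div gap = c}"
  have "{y\<in>light_starts. f y \<noteq> majority y} \<subseteq> (\<Union>c\<in>{..(num_windows - 1) div gap}. ?block c)"
  proof
    fix y assume y: "y \<in> {y\<in>light_starts. f y \<noteq> majority y}"
    then have "(y - 1) div gap \<le> (num_windows - 1) div gap"
      unfolding light_starts_def by (intro div_le_mono diff_le_mono) simp
    then show "y \<in> (\<Union>c\<in>{..(num_windows - 1) div gap}. ?block c)" using y by auto
  qed
  then have "card {y\<in>light_starts. f y \<noteq> majority y} \<le> card (\<Union>c\<in>{..(num_windows - 1) div gap}. ?block c)"
    by (rule card_mono[rotated]) (simp add: finite_light_starts)
  also have "\<dots> \<le> (\<Sum>c\<in>{..(num_windows - 1) div gap}. card (?block c))"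
    by (rule card_UN_le) simp
  also have "\<dots> \<le> (\<Sum>c\<in>{..(num_windows - 1) div gap}. \<mu>)" by (intro sum_mono card_minority_block)
  also have "\<dots> \<le> (num_windows div gap + 1) * \<mu>" by (simp add: div_le_mono)
  finally show ?thesis by (simp add: mult.commute)
qed

lemma mismatches_rounded:
  "mismatches n f rounded \<le> card heavy_starts + \<mu> * (num_windows div gap + 1) + w"
proof -
  have "{y\<in>{1..n}. f y \<noteq> rounded y}
      \<subseteq> heavy_starts \<union> {num_windows<..n} \<union> {y\<in>light_starts. f y \<noteq> majority y}"
  proof
    fix y assume y: "y \<in> {y\<in>{1..n}. f y \<noteq> rounded y}"
    show "y \<in> heavy_starts \<union> {num_windows<..n} \<union> {y\<in>light_starts. f y \<noteq> majority y}"
    proof (cases "y \<in> light_starts")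
      case True
      then have "rounded y = majority y" unfolding rounded_def using last_light_eq by simp
      then show ?thesis using y True by auto
    qed (use y in \<open>auto simp: heavy_starts_def light_starts_def\<close>)
  qed
  then have "mismatches n f rounded
      \<le> card (heavy_starts \<union> {num_windows<..n} \<union> {y\<in>light_starts. f y \<noteq> majority y})"
    unfolding mismatches_def by (rule card_mono[rotated]) (simp add: heavy_starts_def finite_light_starts)
  also have "\<dots> \<le> card heavy_starts + card {num_windows<..n} + card {y\<in>light_starts. f y \<noteq> majority y}"
    by (meson card_Un_le add_le_mono le_refl order_trans)
  finally show ?thesis using card_light_minority num_windows_props by simp
qed

text \<open>A window that contains both values contains a change point, and every change point lies
  in fewer than \<open>w\<close> windows.\<close>
lemma card_mixed_windows:
  "card {x\<in>{1..num_windows}. 0 < ones x \<and> ones x < w} \<le> num_changes n f * (w - 1)"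
proof -
  have "{x\<in>{1..num_windows}. 0 < ones x \<and> ones x < w} \<subseteq> (\<Union>p\<in>changes n f. {p + 1 - w..<p})"
  proof
    fix x assume x: "x \<in> {x\<in>{1..num_windows}. 0 < ones x \<and> ones x < w}"
    then have "{y\<in>window x. f y} \<noteq> {}" unfolding ones_def by (intro notI) simp
    moreover have "{y\<in>window x. \<not> f y} \<noteq> {}" using x card_zeros[of x] by (intro notI) simp
    ultimately obtain y1 y2 where y: "y1 \<in> window x" "f y1" "y2 \<in> window x" "\<not> f y2" by blast
    have "y1 \<noteq> y2" using y by auto
    define a where "a = min y1 y2"
    define b where "b = max y1 y2"
    have ab: "a < b" "x \<le> a" "b < x + w" "x \<ge> 1" "x \<le> num_windows"
      using x y \<open>y1 \<noteq> y2\<close> unfolding a_def b_def window_def by (auto simp: min_def max_def)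
    then have "ext0 f a \<noteq> ext0 f b" using y unfolding a_def b_def ext0_def by (auto simp: min_def max_def)
    then obtain p where p: "p \<in> {a<..b}" "ext0 f p \<noteq> ext0 f (p - 1)"
      using ex_change_between[OF ab(1)] by blast
    then have "p \<in> changes n f" using ab num_windows_props unfolding changes_def by auto
    moreover have "x \<in> {p + 1 - w..<p}" using p ab by auto
    ultimately show "x \<in> (\<Union>p\<in>changes n f. {p + 1 - w..<p})" by blast
  qed
  then have "card {x\<in>{1..num_windows}. 0 < ones x \<and> ones x < w} \<le> card (\<Union>p\<in>changes n f. {p + 1 - w..<p})"
    by (rule card_mono[rotated]) simp
  also have "\<dots> \<le> (\<Sum>p\<in>changes n f. card {p + 1 - w..<p})" by (rule card_UN_le) simp
  also have "\<dots> \<le> (\<Sum>p\<in>changes n f. w - 1)" by (intro sum_mono) auto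
  finally show ?thesis by (simp add: num_changes_def)
qed

definition window_sample :: "nat \<Rightarrow> nat \<Rightarrow> (nat \<Rightarrow> nat) pmf" where
  "window_sample R x = Pi_pmf {..<R} 0 (\<lambda>_. pmf_of_set (window x))"

definition window_sampler :: "nat \<Rightarrow> (nat \<Rightarrow> nat) pmf" where
  "window_sampler R = bind_pmf (pmf_of_set {1..num_windows}) (window_sample R)"

lemma window_sample_range: "js \<in> set_pmf (window_sample R x) \<Longrightarrow> j < R \<Longrightarrow> js j \<in> window x"
  using set_Pi_pmf_lessThan_memD[of js R 0 "pmf_of_set (window x)" j] window_nonempty
  unfolding window_sample_def by simp

lemma window_sampler_range:
  assumes "js \<in> set_pmf (window_sampler R)" "j < R"
  shows "js j \<in> {1..n}"
proof -
  obtain x where "x \<in> {1..num_windows}" "js \<in> set_pmf (window_sample R x)"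
    using assms(1) num_windows_props unfolding window_sampler_def by auto
  then show ?thesis
    using window_sample_range[OF _ assms(2)] num_windows_props unfolding window_def by fastforce
qed

lemma prob_window_sampler:
  "measure_pmf.prob (window_sampler R) {js. sees_both f R js}
     = (\<Sum>x\<in>{1..num_windows}. measure_pmf.prob (window_sample R x) {js. sees_both f R js}) / num_windows"
  unfolding window_sampler_def using num_windows_props by (subst measure_bind_pmf_of_set) auto

lemma prob_heavy_sees_both:
  assumes "heavy x"
  shows "1 - 2 * (1 - real \<mu> / w) ^ R \<le> measure_pmf.prob (window_sample R x) {js. sees_both f R js}"
proof -
  have w: "real w > 0" using two_mu_less by simp
  have "measure_pmf.prob (window_sample R x) {js. \<not> sees_both f R js}
      \<le> measure_pmf.prob (window_sample R x) ({js. \<forall>j<R. f (js j)} \<union> {js. \<forall>j<R. \<not> f (js j)})"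
    by (intro measure_pmf.finite_measure_mono) (auto simp: sees_both_def)
  also have "\<dots> \<le> measure_pmf.prob (window_sample R x) {js. \<forall>j<R. f (js j)}
      + measure_pmf.prob (window_sample R x) {js. \<forall>j<R. \<not> f (js j)}"
    by (rule measure_Un_le) auto
  also have "\<dots> = (real (ones x) / w) ^ R + (real (w - ones x) / w) ^ R"
  proof -
    have "measure_pmf.prob (window_sample R x) {js. \<forall>j<R. f (js j)} = (real (ones x) / w) ^ R"
      unfolding window_sample_def by (simp add: prob_Pi_pmf_of_set_all window_nonempty card_window ones_def)
    moreover have "measure_pmf.prob (window_sample R x) {js. \<forall>j<R. \<not> f (js j)} = (real (w - ones x) / w) ^ R"
      unfolding window_sample_def
      by (subst prob_Pi_pmf_of_set_all[where P = "\<lambda>y. \<not> f y"]) (simp_all add: window_nonempty card_window card_zeros)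
    ultimately show ?thesis by simp
  qed
  also have "\<dots> \<le> (1 - real \<mu> / w) ^ R + (1 - real \<mu> / w) ^ R"
    using assms ones_le[of x] w by (intro add_mono power_mono) (auto simp: heavy_def field_simps)
  finally show ?thesis by (simp add: measure_pmf_Collect_not)
qed

lemma prob_unmixed_sees_both:
  assumes "ones x = 0 \<or> ones x = w"
  shows "measure_pmf.prob (window_sample R x) {js. sees_both f R js} = 0"
proof -
  have "{y\<in>window x. f y} = {} \<or> {y\<in>window x. \<not> f y} = {}"
    using assms card_zeros[of x] unfolding ones_def by auto
  then have "\<not> sees_both f R js" if "js \<in> set_pmf (window_sample R x)" for js
    using window_sample_range[OF that] unfolding sees_both_def by blast
  then have "measure_pmf.prob (window_sample R x) {js. \<not> sees_both f R js} = 1"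
    by (rule measure_pmf_eq_1_if_all)
  then show ?thesis by (simp add: measure_pmf_Collect_not)
qed

lemma prob_sees_both_upper:
  "measure_pmf.prob (window_sampler R) {js. sees_both f R js} \<le> real (num_changes n f * (w - 1)) / num_windows"
proof -
  have "(\<Sum>x\<in>{1..num_windows}. measure_pmf.prob (window_sample R x) {js. sees_both f R js})
      \<le> (\<Sum>x\<in>{1..num_windows}. if 0 < ones x \<and> ones x < w then 1 else 0)"
  proof (rule sum_mono)
    fix x
    show "measure_pmf.prob (window_sample R x) {js. sees_both f R js}
        \<le> (if 0 < ones x \<and> ones x < w then 1 else 0)"
      using prob_unmixed_sees_both[of x R] ones_le[of x] by (cases "0 < ones x \<and> ones x < w") auto
  qed
  also have "\<dots> = real (card {x\<in>{1..num_windows}. 0 < ones x \<and> ones x < w})"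
    by (simp add: sum.If_cases Int_def)
  also have "\<dots> \<le> real (num_changes n f * (w - 1))" using card_mixed_windows by linarith
  finally show ?thesis unfolding prob_window_sampler using num_windows_props by (simp add: divide_right_mono)
qed

lemma prob_sees_both_lower:
  "real (card heavy_starts) * (1 - 2 * (1 - real \<mu> / w) ^ R) / num_windows
     \<le> measure_pmf.prob (window_sampler R) {js. sees_both f R js}"
proof -
  have "real (card heavy_starts) * (1 - 2 * (1 - real \<mu> / w) ^ R)
      = (\<Sum>x\<in>{1..num_windows}. if heavy x then 1 - 2 * (1 - real \<mu> / w) ^ R else 0)"
    by (simp add: sum.If_cases Int_def heavy_starts_def)
  also have "\<dots> \<le> (\<Sum>x\<in>{1..num_windows}. measure_pmf.prob (window_sample R x) {js. sees_both f R js})"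
    by (intro sum_mono) (auto simp: prob_heavy_sees_both)
  finally show ?thesis unfolding prob_window_sampler using num_windows_props by (simp add: divide_right_mono)
qed

end

locale tuned_windows = windows +
  fixes k :: nat and \<epsilon> :: real
  assumes eps: "0 < \<epsilon>" "\<epsilon> \<le> 1" and eps_k: "16 \<le> \<epsilon> * k"
    and mu_small: "real \<mu> \<le> \<epsilon> * w / 20" and kw_small: "real k * w \<le> \<epsilon> * n / 8"
begin

lemma k_ge: "16 \<le> real k"
  using eps_k mult_left_le_one_le[of "real k" \<epsilon>] eps by simp

lemma w_pos: "0 < real w"
  using two_mu_less by simp

lemma gap_ge: "real w * (1 - \<epsilon> / 10) \<le> real gap"
  using mu_small two_mu_less unfolding gap_def by (simp add: of_nat_diff algebra_simps)

lemma w_small: "real w \<le> \<epsilon> * n / 128"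
  using kw_small k_ge mult_right_mono[of 16 "real k" "real w"] by simp

lemma n_over_k: "real n / k \<le> \<epsilon> * n / 16"
proof -
  have "1 / real k \<le> \<epsilon> / 16" using eps_k k_ge by (simp add: field_simps)
  then have "real n * (1 / real k) \<le> real n * (\<epsilon> / 16)" by (intro mult_left_mono) auto
  then show ?thesis by (simp add: mult.commute)
qed

lemma num_changes_rounded_less:
  assumes "card heavy_starts < real k * w * (1 + \<epsilon> / 4)"
  shows "real (num_changes n rounded - 1) < real k * (1 + \<epsilon> / 2)"
proof -
  define c where "c = real (num_changes n rounded - 1)"
  have "c * (real w * (1 - \<epsilon> / 10)) \<le> c * gap"
    using gap_ge unfolding c_def by (intro mult_left_mono) auto
  also have "\<dots> \<le> card heavy_starts"
    using num_changes_rounded unfolding c_def by (metis of_nat_le_iff of_nat_mult)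
  finally have le_heavy: "c * (real w * (1 - \<epsilon> / 10)) \<le> card heavy_starts" .
  have "1 + \<epsilon> / 4 \<le> (1 + \<epsilon> / 2) * (1 - \<epsilon> / 10)"
  proof -
    have "(1 + \<epsilon> / 2) * (1 - \<epsilon> / 10) = 1 + 2 * \<epsilon> / 5 - \<epsilon> * \<epsilon> / 20" by (simp add: field_simps)
    moreover have "\<epsilon> * \<epsilon> \<le> \<epsilon>" using eps by (simp add: mult_left_le_one_le)
    ultimately show ?thesis using eps by linarith
  qed
  then have "real k * w * (1 + \<epsilon> / 4) \<le> real k * w * ((1 + \<epsilon> / 2) * (1 - \<epsilon> / 10))"
    by (intro mult_left_mono) auto
  then have "c * (real w * (1 - \<epsilon> / 10)) < real k * w * ((1 + \<epsilon> / 2) * (1 - \<epsilon> / 10))"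
    using le_heavy assms by linarith
  then have "real w * (c * (1 - \<epsilon> / 10)) < real w * (real k * (1 + \<epsilon> / 2) * (1 - \<epsilon> / 10))"
    by (simp only: ac_simps)
  then have "c * (1 - \<epsilon> / 10) < real k * (1 + \<epsilon> / 2) * (1 - \<epsilon> / 10)"
    using w_pos by (simp add: mult_less_cancel_left_pos)
  then show ?thesis using eps unfolding c_def by (simp add: mult_less_cancel_right_pos)
qed

lemma mismatches_rounded_le:
  "real (mismatches n f rounded) \<le> card heavy_starts + \<epsilon> * n / 18 + \<epsilon> * n / 64"
proof -
  have "real (num_windows div gap) \<le> real num_windows / gap" by (rule of_nat_div_le_of_nat)
  then have "real \<mu> * real (num_windows div gap) \<le> real \<mu> * real num_windows / gap"
    by (metis mult_left_mono of_nat_0_le_iff times_divide_eq_right)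
  also have "\<dots> \<le> (\<epsilon> * w / 20) * n / (real w * (1 - \<epsilon> / 10))"
    using mu_small num_windows_props gap_ge eps w_pos by (intro frac_le mult_mono) auto
  also have "\<dots> = ((\<epsilon> * n / 20) * real w) / ((1 - \<epsilon> / 10) * real w)" by (simp add: ac_simps)
  also have "\<dots> = (\<epsilon> * n / 20) / (1 - \<epsilon> / 10)" using w_pos by simp
  also have "\<dots> \<le> \<epsilon> * n / 18"
    using eps mult_left_le_one_le[of "real n" \<epsilon>] by (simp add: field_simps)
  finally have "real \<mu> * real (num_windows div gap) \<le> \<epsilon> * n / 18" .
  moreover have "real \<mu> + w \<le> \<epsilon> * n / 64" using w_small two_mu_less by linarith
  moreover have "real (mismatches n f rounded)
      \<le> real (card heavy_starts) + real \<mu> * real (num_windows div gap) + real \<mu> + real w"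
    using mismatches_rounded by (simp add: algebra_simps flip: of_nat_mult of_nat_add)
  ultimately show ?thesis by linarith
qed

lemma reduce_rounded:
  assumes "real (num_changes n g - 1) < real k * (1 + \<epsilon> / 2)"
  obtains g' where "num_changes n g' \<le> k" "real (mismatches n g g') \<le> \<epsilon> * n / 4 + \<epsilon> * n / 16"
proof -
  obtain g' where g': "num_changes n g' \<le> k"
    "mismatches n g g' \<le> ((num_changes n g - k + 1) div 2) * ((n - 1) div k)"
    using reduce_changes[of k n g] k_ge by auto
  have "real ((num_changes n g - k + 1) div 2) \<le> real k * \<epsilon> / 4 + 1"
  proof (cases "num_changes n g \<le> k")
    case False
    then have "real (num_changes n g - k + 1) = real (num_changes n g - 1) - k + 2"
      by (simp add: of_nat_diff)
    moreover have "real k * (1 + \<epsilon> / 2) = real k + real k * \<epsilon> / 2" by (simp add: algebra_simps)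
    moreover have "real ((num_changes n g - k + 1) div 2) \<le> real (num_changes n g - k + 1) / real 2"
      by (rule of_nat_div_le_of_nat)
    ultimately show ?thesis using assms by linarith
  qed (use eps in simp)
  moreover have "real ((n - 1) div k) \<le> real n / k"
  proof -
    have "real ((n - 1) div k) \<le> real (n - 1) / real k" by (rule of_nat_div_le_of_nat)
    also have "\<dots> \<le> real n / real k" by (intro divide_right_mono) auto
    finally show ?thesis .
  qed
  ultimately have "real ((num_changes n g - k + 1) div 2) * real ((n - 1) div k)
      \<le> (real k * \<epsilon> / 4 + 1) * (real n / k)"
    by (intro mult_mono) (use eps in auto)
  moreover have "real (mismatches n g g') \<le> real ((num_changes n g - k + 1) div 2) * real ((n - 1) div k)"
    using g'(2) by (simp flip: of_nat_mult)
  moreover have "(real k * \<epsilon> / 4 + 1) * (real n / k) = \<epsilon> * n / 4 + real n / k"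
    using k_ge by (simp add: field_simps)
  ultimately have "real (mismatches n g g') \<le> \<epsilon> * n / 4 + \<epsilon> * n / 16"
    using n_over_k by linarith
  then show ?thesis using that g'(1) by blast
qed

text \<open>Rounding to window majorities and then cancelling change points would make a far
  function close to \<open>k\<close>-monotone unless a \<open>(1 + \<epsilon> / 4)\<close> excess of heavy windows pays for
  the rounding.\<close>
lemma far_imp_many_heavy:
  assumes far: "far_from_k_monotone n k \<epsilon> f"
  shows "real k * w * (1 + \<epsilon> / 4) \<le> card heavy_starts"
proof (rule ccontr)
  assume "\<not> ?thesis"
  then have few: "card heavy_starts < real k * w * (1 + \<epsilon> / 4)" by simp
  obtain g' where g': "num_changes n g' \<le> k"
    "real (mismatches n rounded g') \<le> \<epsilon> * n / 4 + \<epsilon> * n / 16"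
    using reduce_rounded[OF num_changes_rounded_less[OF few]] by blast
  have "real k * w * (1 + \<epsilon> / 4) \<le> (\<epsilon> * n / 8) * (5 / 4)"
    using kw_small eps by (intro mult_mono) auto
  moreover have "0 < \<epsilon> * n" using eps two_mu_less w_le by simp
  moreover have "\<epsilon> * n \<le> real (mismatches n f g')"
    using far_imp_mismatches_ge[OF far _ g'(1)] two_mu_less w_le by simp
  moreover have "real (mismatches n f g') \<le> real (mismatches n f rounded) + real (mismatches n rounded g')"
    using mismatches_triangle[of n f g' rounded] by linarith
  ultimately show False using mismatches_rounded_le g'(2) few by linarith
qed

end

lemma window_parameters:
  fixes n k :: nat and \<epsilon> :: real
  assumes e: "0 < \<epsilon>" "\<epsilon> \<le> 1" and ek: "16 \<le> \<epsilon> * k" and big: "41 / \<epsilon> \<le> \<epsilon> * n / (8 * k)"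
  defines "w \<equiv> nat \<lfloor>\<epsilon> * n / (8 * k)\<rfloor>"
  defines "\<mu> \<equiv> nat \<lfloor>\<epsilon> * w / 20\<rfloor>"
  shows "tuned_windows n w \<mu> k \<epsilon>" and "\<epsilon> / 40 \<le> real \<mu> / w" and "\<epsilon> * n / 9 \<le> real k * w"
proof -
  have k: "16 \<le> real k" using ek e mult_left_le_one_le[of "real k" \<epsilon>] by simp
  have "real w = of_int \<lfloor>\<epsilon> * n / (8 * k)\<rfloor>" unfolding w_def using e by simp
  then have w: "real w \<le> \<epsilon> * n / (8 * k)" "\<epsilon> * n / (8 * k) - 1 \<le> real w" by linarith+
  have "1 \<le> 1 / \<epsilon>" using e by simp
  then have w40: "40 / \<epsilon> \<le> real w" using w big by (simp add: add_divide_distrib[symmetric] field_simps)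
  then have ew: "40 \<le> \<epsilon> * w" using e by (simp add: field_simps)
  have "real \<mu> = of_int \<lfloor>\<epsilon> * w / 20\<rfloor>" unfolding \<mu>_def using e by simp
  then have mu: "real \<mu> \<le> \<epsilon> * w / 20" "\<epsilon> * w / 20 - 1 \<le> real \<mu>" by linarith+
  have "\<epsilon> * w \<le> w" using e by (simp add: mult_left_le_one_le)
  then have "1 \<le> \<mu>" "2 * \<mu> < w" using mu ew by linarith+
  moreover have "\<epsilon> * n / (8 * k) \<le> \<epsilon> * n / 1" using e k by (intro divide_left_mono) auto
  then have "\<epsilon> * n / (8 * k) \<le> n" using e mult_left_le_one_le[of "real n" \<epsilon>] by simp
  then have "w \<le> n" using w by linarith
  moreover have "real k * w \<le> \<epsilon> * n / 8" using w k by (simp add: field_simps)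
  ultimately show "tuned_windows n w \<mu> k \<epsilon>"
    using mu e ek by unfold_locales auto
  have "\<epsilon> * w / 40 \<le> real \<mu>" using mu ew by linarith
  moreover have "0 < real w" using w40 e by (smt (verit) divide_pos_pos)
  ultimately show "\<epsilon> / 40 \<le> real \<mu> / w" using pos_le_divide_eq[of "real w" "\<epsilon> / 40" "real \<mu>"] by simp
  have "real k * 328 \<le> \<epsilon> ^ 2 * n" using big e k by (simp add: field_simps power2_eq_square)
  moreover have "\<epsilon> ^ 2 * n \<le> \<epsilon> * n" using e by (simp add: power2_eq_square mult_left_le_one_le)
  moreover have "\<epsilon> * n / 8 - k \<le> real k * w" using w k by (simp add: field_simps)
  ultimately show "\<epsilon> * n / 9 \<le> real k * w" by linarith
qed

lemma window_miss_le:
  fixes \<epsilon> x :: real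
  assumes e: "0 < \<epsilon>" and x: "\<epsilon> / 40 \<le> x" "x \<le> 1"
  defines "R \<equiv> nat \<lceil>(40 / \<epsilon>) * ln (64 / \<epsilon>)\<rceil>"
  shows "2 * (1 - x) ^ R \<le> \<epsilon> / 32"
proof -
  have "ln (64 / \<epsilon>) \<le> (\<epsilon> / 40) * R"
  proof -
    have "ln (64 / \<epsilon>) = (\<epsilon> / 40) * ((40 / \<epsilon>) * ln (64 / \<epsilon>))" using e by simp
    also have "\<dots> \<le> (\<epsilon> / 40) * R" unfolding R_def using e by (intro mult_left_mono) linarith+
    finally show ?thesis .
  qed
  also have "\<dots> \<le> x * R" using x by (intro mult_right_mono) auto
  finally have "exp (- x * R) \<le> exp (- ln (64 / \<epsilon>))" by simp
  also have "\<dots> = \<epsilon> / 64" using e by (simp add: exp_minus inverse_eq_divide)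
  finally have "exp (- x * R) \<le> \<epsilon> / 64" .
  then show ?thesis using one_minus_power_le_exp[OF x(2), of R] by simp
qed

text \<open>For large \<open>k\<close> and \<open>n\<close>: a random window sees both values with probability at most
  \<open>k w / N\<close> for \<open>k\<close>-monotone \<open>f\<close>, and at least \<open>(1 + \<epsilon> / 8) k w / N\<close> for far \<open>f\<close>, because
  it is then heavy that often. Each window is probed at \<open>R\<close> random points.\<close>
lemma window_tester:
  fixes n k :: nat and \<epsilon> :: real
  assumes e: "0 < \<epsilon>" "\<epsilon> \<le> 1" and ek: "16 \<le> \<epsilon> * k" and big: "41 / \<epsilon> \<le> \<epsilon> * n / (8 * k)"
  defines "w \<equiv> nat \<lfloor>\<epsilon> * n / (8 * k)\<rfloor>"
  defines "\<mu> \<equiv> nat \<lfloor>\<epsilon> * w / 20\<rfloor>"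
    and "R \<equiv> nat \<lceil>(40 / \<epsilon>) * ln (64 / \<epsilon>)\<rceil>" and "s \<equiv> nat \<lceil>20736 / \<epsilon> ^ 4\<rceil>"
  shows "\<exists>T. k_monotonicity_tester n k \<epsilon> (s * R) T"
proof -
  interpret tuned_windows n w \<mu> f k \<epsilon> for f
    using window_parameters(1)[OF e ek big] unfolding w_def \<mu>_def .
  have mu_w: "\<epsilon> / 40 \<le> real \<mu> / w" and kw: "\<epsilon> * n / 9 \<le> real k * w"
    using window_parameters(2,3)[OF e ek big] unfolding w_def \<mu>_def by auto
  define N where "N = real num_windows"
  have N: "0 < N" "N \<le> n" using num_windows_props two_mu_less unfolding N_def by auto
  define lo where "lo = real k * w / N"
  define hi where "hi = real k * w * (1 + \<epsilon> / 8) / N"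
  have "\<epsilon> ^ 2 / 144 \<le> (hi - lo) / 2"
  proof -
    have "\<epsilon> * N \<le> \<epsilon> * n" using N e by (intro mult_left_mono) auto
    then have "\<epsilon> / 9 * N \<le> real k * w" using kw by simp
    then have "\<epsilon> / 9 \<le> real k * w / N" using N by (simp add: pos_le_divide_eq)
    then have "(\<epsilon> / 9) * (\<epsilon> / 16) \<le> (real k * w / N) * (\<epsilon> / 16)" using e by (intro mult_right_mono) auto
    moreover have "(real k * w / N) * (\<epsilon> / 16) = (hi - lo) / 2"
      unfolding hi_def lo_def using N by (simp add: field_simps)
    ultimately show ?thesis by (simp add: power2_eq_square)
  qed
  then have "(\<epsilon> ^ 2 / 144)\<^sup>2 \<le> ((hi - lo) / 2)\<^sup>2" using e by (intro power_mono) auto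
  moreover have "20736 / \<epsilon> ^ 4 \<le> real s" unfolding s_def by linarith
  ultimately have "(20736 / \<epsilon> ^ 4) * (\<epsilon> ^ 2 / 144)\<^sup>2 \<le> real s * ((hi - lo) / 2)\<^sup>2"
    using e by (intro mult_mono) auto
  moreover have "(20736 / \<epsilon> ^ 4) * (\<epsilon> ^ 2 / 144)\<^sup>2 = 1"
    using e by (simp add: power_divide power_mult[symmetric])
  ultimately have gap: "1 \<le> real s * ((hi - lo) / 2)\<^sup>2" by linarith
  have "0 < s" using e unfolding s_def by simp
  moreover have "lo \<le> hi"
    unfolding lo_def hi_def using e N
    by (intro divide_right_mono mult_le_cancel_left1[THEN iffD2]) (auto simp: not_less)
  moreover note gap
  moreover have "length (map js [0..<R]) \<le> R \<and> set (map js [0..<R]) \<subseteq> {1..n}"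
    if "js \<in> set_pmf (window_sampler R)" for js
    using window_sampler_range[OF that] by auto
  ultimately obtain T where T: "nonadaptive_tester n (s * R) T"
    "\<And>f. measure_pmf.prob (window_sampler R) {js. sees_both f R js} \<le> lo \<Longrightarrow> 2/3 \<le> accept_prob T f"
    "\<And>f. hi \<le> measure_pmf.prob (window_sampler R) {js. sees_both f R js} \<Longrightarrow> 2/3 \<le> 1 - accept_prob T f"
    by (rule threshold_tester[where Y = "\<lambda>h js. sees_both h R js"]) (auto simp: sees_both_def)
  have "2/3 \<le> accept_prob T f" if "k_monotone n k f" for f
  proof (rule T(2))
    have "num_changes n f * (w - 1) \<le> k * w"
      using that by (intro mult_le_mono) (auto simp: k_monotone_iff_num_changes_le)
    then have "real (num_changes n f * (w - 1)) / N \<le> lo"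
      unfolding lo_def using N by (intro divide_right_mono) (auto simp flip: of_nat_mult)
    then show "measure_pmf.prob (window_sampler R) {js. sees_both f R js} \<le> lo"
      using prob_sees_both_upper[of R f] unfolding N_def by linarith
  qed
  moreover have "2/3 \<le> 1 - accept_prob T f" if far: "far_from_k_monotone n k \<epsilon> f" for f
  proof (rule T(3))
    define \<eta> where "\<eta> = 2 * (1 - real \<mu> / w) ^ R"
    have "\<eta> \<le> \<epsilon> / 32" unfolding \<eta>_def R_def using e mu_w two_mu_less by (intro window_miss_le) auto
    have "1 + \<epsilon> / 8 \<le> (1 + \<epsilon> / 4) * (1 - \<epsilon> / 32)"
    proof -
      have "(1 + \<epsilon> / 4) * (1 - \<epsilon> / 32) = 1 + 7 * \<epsilon> / 32 - \<epsilon> * \<epsilon> / 128" by (simp add: field_simps)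
      moreover have "\<epsilon> * \<epsilon> \<le> \<epsilon>" using e by (simp add: mult_left_le_one_le)
      ultimately show ?thesis using e by linarith
    qed
    then have "real k * w * (1 + \<epsilon> / 8) \<le> real k * w * (1 + \<epsilon> / 4) * (1 - \<epsilon> / 32)"
      by (simp add: mult_left_mono mult.assoc)
    also have "\<dots> \<le> real (card (heavy_starts f)) * (1 - \<epsilon> / 32)"
      using far_imp_many_heavy[OF far] e by (intro mult_right_mono) auto
    also have "\<dots> \<le> real (card (heavy_starts f)) * (1 - \<eta>)"
      using \<open>\<eta> \<le> \<epsilon> / 32\<close> by (intro mult_left_mono) auto
    finally have "hi \<le> real (card (heavy_starts f)) * (1 - \<eta>) / N"
      unfolding hi_def using N by (intro divide_right_mono) auto
    then show "hi \<le> measure_pmf.prob (window_sampler R) {js. sees_both f R js}"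
      using prob_sees_both_lower[of f R] unfolding N_def \<eta>_def by linarith
  qed
  ultimately show ?thesis using T(1) unfolding k_monotonicity_tester_def by blast
qed

lemma trivial_tester:
  assumes "k \<ge> 1" "\<epsilon> > 0"
  shows "k_monotonicity_tester 1 k \<epsilon> 0 (return_pmf ([], \<lambda>_. True))"
proof -
  have "\<not> far_from_k_monotone 1 k \<epsilon> f" for f
  proof
    assume "far_from_k_monotone 1 k \<epsilon> f"
    then have "k < num_changes 1 f" using far_imp_num_changes_gt assms(2) by simp
    moreover have "num_changes 1 f \<le> 1"
      using card_mono[OF _ changes_subset, of 1 f] by (simp add: num_changes_def)
    ultimately show False using assms(1) by simp
  qed
  then show ?thesis
    unfolding k_monotonicity_tester_def nonadaptive_tester_def accept_prob_def by simp
qed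

lemma ln_div_le:
  fixes \<epsilon> a :: real
  assumes "0 < \<epsilon>" "\<epsilon> \<le> 1" "1 \<le> a"
  shows "ln (a / \<epsilon>) \<le> a * (1 + ln (1 / \<epsilon>))"
proof -
  have "ln (a / \<epsilon>) = ln a + ln (1 / \<epsilon>)" using assms by (simp add: ln_div)
  also have "\<dots> \<le> (a - 1) + a * ln (1 / \<epsilon>)"
    using assms ln_le_minus_one[of a] mult_right_mono[of 1 a "ln (1 / \<epsilon>)"] by simp
  finally show ?thesis by (simp add: algebra_simps)
qed

lemma nat_ceiling_le: "0 \<le> y \<Longrightarrow> real (nat \<lceil>y\<rceil>) \<le> y + 1"
  by linarith

lemma alternation_queries_le:
  fixes k :: nat and \<epsilon> :: real
  assumes e: "0 < \<epsilon>" "\<epsilon> \<le> 1" and k: "real k < 16 / \<epsilon>"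
  shows "real (nat \<lceil>(k + 1) / \<epsilon> * ln (3 * (k + 1))\<rceil>) \<le> 868 * ((1 / \<epsilon>) ^ 2 * (1 + ln (1 / \<epsilon>)))"
proof -
  define X where "X = 1 / \<epsilon>"
  define L where "L = 1 + ln (1 / \<epsilon>)"
  have X: "1 \<le> X" and L: "1 \<le> L" using e unfolding X_def L_def by simp_all
  have k17: "real k + 1 \<le> 17 * X" using k e unfolding X_def by (simp add: field_simps)
  then have "3 * (real k + 1) \<le> 51 / \<epsilon>" unfolding X_def by simp
  then have "ln (3 * (real k + 1)) \<le> ln (51 / \<epsilon>)" by (subst ln_le_cancel_iff) (use e in auto)
  also have "\<dots> \<le> 51 * L" using ln_div_le[OF e, of 51] unfolding L_def by simp
  finally have "(real k + 1) * X * ln (3 * (real k + 1)) \<le> (17 * X) * X * (51 * L)"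
    using k17 X by (intro mult_mono) auto
  moreover have "(real k + 1) / \<epsilon> * ln (3 * (real k + 1)) = (real k + 1) * X * ln (3 * (real k + 1))"
    unfolding X_def by simp
  moreover have "1 \<le> X\<^sup>2 * L" using X L by (simp add: one_le_power mult_ge1_I)
  ultimately have "(real k + 1) / \<epsilon> * ln (3 * (real k + 1)) + 1 \<le> 868 * (X\<^sup>2 * L)"
    by (simp add: power2_eq_square algebra_simps)
  moreover have "0 \<le> (real k + 1) / \<epsilon> * ln (3 * (real k + 1))" using e by simp
  ultimately show ?thesis
    using nat_ceiling_le[of "(real k + 1) / \<epsilon> * ln (3 * (real k + 1))"]
    unfolding X_def L_def by (simp add: add.commute)
qed

lemma window_queries_le:
  assumes e: "0 < \<epsilon>" "\<epsilon> \<le> 1"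
  shows "real (nat \<lceil>20736 / \<epsilon> ^ 4\<rceil> * nat \<lceil>(40 / \<epsilon>) * ln (64 / \<epsilon>)\<rceil>)
    \<le> 53107457 * ((1 / \<epsilon>) ^ 5 * (1 + ln (1 / \<epsilon>)))"
proof -
  define X where "X = 1 / \<epsilon>"
  define L where "L = 1 + ln (1 / \<epsilon>)"
  have X: "1 \<le> X" and L: "1 \<le> L" using e unfolding X_def L_def by simp_all
  have "real (nat \<lceil>20736 / \<epsilon> ^ 4\<rceil>) \<le> 20736 * X ^ 4 + 1"
    using nat_ceiling_le[of "20736 / \<epsilon> ^ 4"] e unfolding X_def by (simp add: power_one_over)
  also have "\<dots> \<le> 20737 * X ^ 4" using one_le_power[OF X, of 4] by simp
  finally have s: "real (nat \<lceil>20736 / \<epsilon> ^ 4\<rceil>) \<le> 20737 * X ^ 4" .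
  have "ln (64 / \<epsilon>) \<le> 64 * L" using ln_div_le[OF e, of 64] unfolding L_def by simp
  then have "(40 / \<epsilon>) * ln (64 / \<epsilon>) \<le> (40 / \<epsilon>) * (64 * L)" using e by (intro mult_left_mono) auto
  moreover have "0 \<le> (40 / \<epsilon>) * ln (64 / \<epsilon>)" using e by simp
  ultimately have "real (nat \<lceil>(40 / \<epsilon>) * ln (64 / \<epsilon>)\<rceil>) \<le> (40 / \<epsilon>) * (64 * L) + 1"
    using nat_ceiling_le by (meson add_right_mono order_trans)
  also have "\<dots> = 2560 * (X * L) + 1" unfolding X_def by simp
  also have "\<dots> \<le> 2561 * (X * L)" using mult_ge1_I[OF X L] by linarith
  finally have "real (nat \<lceil>20736 / \<epsilon> ^ 4\<rceil>) * real (nat \<lceil>(40 / \<epsilon>) * ln (64 / \<epsilon>)\<rceil>)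
      \<le> (20737 * X ^ 4) * (2561 * (X * L))"
    using s by (intro mult_mono) auto
  also have "\<dots> = 53107457 * (X ^ 5 * L)" by (simp add: algebra_simps numeral_eq_Suc)
  finally show ?thesis unfolding X_def L_def by simp
qed

lemma edge_queries_le:
  assumes e: "0 < \<epsilon>" "\<epsilon> \<le> 1"
  shows "real (nat \<lceil>4 * (328 / \<epsilon>\<^sup>2)\<^sup>2 / \<epsilon>\<^sup>2\<rceil> * 2) \<le> 860674 * (1 / \<epsilon>) ^ 6"
proof -
  define c where "c = 4 * (328 / \<epsilon>\<^sup>2)\<^sup>2 / \<epsilon>\<^sup>2"
  have "c = 430336 * (1 / \<epsilon>) ^ 6"
    using e unfolding c_def by (simp add: power_divide power_one_over field_simps)
  moreover have "1 \<le> (1 / \<epsilon>) ^ 6" using e by (simp add: one_le_power)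
  moreover have "real (nat \<lceil>c\<rceil>) \<le> c + 1" using e unfolding c_def by (intro nat_ceiling_le) simp
  ultimately have "real (nat \<lceil>c\<rceil>) \<le> 430337 * (1 / \<epsilon>) ^ 6" by linarith
  then show ?thesis unfolding c_def[symmetric] by simp
qed

lemma tester_exists:
  assumes n: "n \<ge> 1" and k: "k \<ge> 1" and e: "0 < \<epsilon>" "\<epsilon> \<le> 1"
  obtains q T where "real q \<le> 100000000 * (1 / \<epsilon>) ^ 7 * (1 + ln (1 / \<epsilon>))"
    "k_monotonicity_tester n k \<epsilon> q T"
proof -
  define L where "L = 1 + ln (1 / \<epsilon>)"
  have L: "1 \<le> L" using e unfolding L_def by simp
  have bound: "c * ((1 / \<epsilon>) ^ m * L) \<le> 100000000 * (1 / \<epsilon>) ^ 7 * L"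
    if "m \<le> 7" "0 \<le> c" "c \<le> 100000000" for m c
  proof -
    have "(1 / \<epsilon>) ^ m \<le> (1 / \<epsilon>) ^ 7" using that e by (intro power_increasing) auto
    then have "c * (1 / \<epsilon>) ^ m \<le> 100000000 * (1 / \<epsilon>) ^ 7" using that e by (intro mult_mono) auto
    then have "c * (1 / \<epsilon>) ^ m * L \<le> 100000000 * (1 / \<epsilon>) ^ 7 * L" using L by (intro mult_right_mono) auto
    then show ?thesis by (simp add: mult.assoc)
  qed
  consider "n = 1" | "real k < 16 / \<epsilon>" | "16 \<le> \<epsilon> * k" "41 / \<epsilon> \<le> \<epsilon> * n / (8 * k)"
    | "n \<ge> 2" "16 \<le> \<epsilon> * k" "\<epsilon> * n / (8 * k) < 41 / \<epsilon>"
    using n e by (fastforce simp: field_simps)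
  then show ?thesis
  proof cases
    case 1
    then show ?thesis using that[of 0] trivial_tester[OF k e(1)] L e unfolding L_def by simp
  next
    case 2
    obtain T where "k_monotonicity_tester n k \<epsilon> (nat \<lceil>(k + 1) / \<epsilon> * ln (3 * (k + 1))\<rceil>) T"
      using alternation_tester[OF n e] by blast
    moreover have "real (nat \<lceil>(k + 1) / \<epsilon> * ln (3 * (k + 1))\<rceil>) \<le> 100000000 * (1 / \<epsilon>) ^ 7 * L"
      using alternation_queries_le[OF e 2] bound[of 2 868] unfolding L_def by linarith
    ultimately show ?thesis using that unfolding L_def by blast
  next
    case 3
    obtain T where "k_monotonicity_tester n k \<epsilon>
        (nat \<lceil>20736 / \<epsilon> ^ 4\<rceil> * nat \<lceil>(40 / \<epsilon>) * ln (64 / \<epsilon>)\<rceil>) T"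
      using window_tester[OF e 3] by blast
    moreover have "real (nat \<lceil>20736 / \<epsilon> ^ 4\<rceil> * nat \<lceil>(40 / \<epsilon>) * ln (64 / \<epsilon>)\<rceil>)
        \<le> 100000000 * (1 / \<epsilon>) ^ 7 * L"
      using window_queries_le[OF e] bound[of 5 53107457] unfolding L_def by linarith
    ultimately show ?thesis using that unfolding L_def by blast
  next
    case 4
    have "real n \<le> 328 / \<epsilon>\<^sup>2 * k" using 4(3) e k by (simp add: field_simps power2_eq_square)
    moreover have "2 \<le> \<epsilon> * k" using 4(2) by simp
    ultimately obtain T where "k_monotonicity_tester n k \<epsilon> (nat \<lceil>4 * (328 / \<epsilon>\<^sup>2)\<^sup>2 / \<epsilon>\<^sup>2\<rceil> * 2) T"
      using edge_tester[OF 4(1) k e] by blast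
    moreover have "(1 / \<epsilon>) ^ 6 \<le> (1 / \<epsilon>) ^ 6 * L" using L e by simp
    then have "real (nat \<lceil>4 * (328 / \<epsilon>\<^sup>2)\<^sup>2 / \<epsilon>\<^sup>2\<rceil> * 2) \<le> 100000000 * (1 / \<epsilon>) ^ 7 * L"
      using edge_queries_le[OF e] bound[of 6 860674] by linarith
    ultimately show ?thesis using that unfolding L_def by blast
  qed
qed

theorem theorem1p5:
  "\<exists>(C::real) (c::nat). \<forall>(n::nat) (k::nat) (\<epsilon>::real).
     n \<ge> 1 \<longrightarrow> k \<ge> 1 \<longrightarrow> 0 < \<epsilon> \<longrightarrow> \<epsilon> \<le> 1 \<longrightarrow>
     (\<exists>(q::nat) (T :: (nat list \<times> (bool list \<Rightarrow> bool)) pmf).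
        real q \<le> C * (1 / \<epsilon>) ^ 7 * (1 + ln (1 / \<epsilon>)) ^ c \<and>
        nonadaptive_tester n q T \<and>
        (\<forall>f. k_monotone n k f \<longrightarrow> accept_prob T f \<ge> 2/3) \<and>
        (\<forall>f. far_from_k_monotone n k \<epsilon> f \<longrightarrow> 1 - accept_prob T f \<ge> 2/3))"
proof -
  have "\<exists>q T. real q \<le> 100000000 * (1 / \<epsilon>) ^ 7 * (1 + ln (1 / \<epsilon>)) ^ 1 \<and>
      nonadaptive_tester n q T \<and> (\<forall>f. k_monotone n k f \<longrightarrow> accept_prob T f \<ge> 2/3) \<and>
      (\<forall>f. far_from_k_monotone n k \<epsilon> f \<longrightarrow> 1 - accept_prob T f \<ge> 2/3)"
    if "n \<ge> 1" "k \<ge> 1" "0 < \<epsilon>" "\<epsilon> \<le> 1" for n k :: nat and \<epsilon> :: real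
    using tester_exists[OF that] unfolding k_monotonicity_tester_def by (metis power_one_right)
  then show ?thesis by blast
qed

end
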